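(* Let $A$ be the UHF algebra given by the $C^*$-closure of $\bigotimes_{n\ge1}M_2$, with local algebras $A_I=\bigotimes_{i\in I}M_2$ for finite $I\subset\mathbf{N}$. Let $(\lambda_i)_{i\ge1}$ be positive numbers with $\lambda_n\ge2(\lambda_1+\dots+\lambda_{n-1})+6^n$ for all $n$. Let $h_i\in A_{\{i\}}$ be the matrix $\begin{pmatrix}\lambda_i&0\\0&0\end{pmatrix}$ at site $i$, $H_n=\sum_{i=1}^nh_i$, $\delta_n(x)=i[H_n,x]$, and let $\alpha$ be the flow $\alpha_t(x)=\lim_{n\to\infty}e^{itH_n}xe^{-itH_n}$ with generator $\delta_\alpha$. Then for all $x\in D(\delta_\alpha^2)$ and all $k\le l$, \[\|\delta_\alpha(x)\|\le\|\delta_\alpha^2(x)\|\quad\text{and}\quad\|\delta_l(x)-\delta_k(x)\|\le2^{-k}\|\delta_\alpha^2(x)\|;\] consequently $\lim_{l\to\infty}\delta_l(x)=\delta_\alpha(x)$ for all $x\in D(\delta_\alpha^2)$, i.e. $D(\delta_\alpha^2)\subseteq\mathcal{D}:=\{x\in D(\delta_\alpha):\lim_n\delta_n(x)=\delta_\alpha(x)\}$, while $\delta_\alpha$ is unbounded.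
   Context: A flow is a strongly continuous one-parameter group of $*$-automorphisms with generator $\delta_\alpha(x)=\lim_{t\to0}(\alpha_t(x)-x)/t$ on its domain $D(\delta_\alpha)$; $D(\delta_\alpha^2)=\{x\in D(\delta_\alpha):\delta_\alpha(x)\in D(\delta_\alpha)\}$. *)

theory Defs
  imports "HOL-Analysis.Analysis"
begin

text \<open>Matrices are functions nat => nat => complex; a 2^n x 2^n matrix only uses indices < 2^n.
  Basis index a of (C^2)^{\<otimes> n}: bit (i-1) of a is the state (0 or 1) at site i.
  An element of A is represented by a norm-Cauchy sequence X with X n in A_{1..n};
  two representatives denote the same element iff the A-norm of their difference is 0.\<close>

type_synonym mat = "nat \<Rightarrow> nat \<Rightarrow> complex"

definition mmul :: "nat \<Rightarrow> mat \<Rightarrow> mat \<Rightarrow> mat" where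
  "mmul d x y = (\<lambda>a b. \<Sum>c<d. x a c * y c b)"

definition mdiff :: "mat \<Rightarrow> mat \<Rightarrow> mat" where
  "mdiff x y = (\<lambda>a b. x a b - y a b)"

definition opnorm :: "nat \<Rightarrow> mat \<Rightarrow> real" where
  "opnorm d x = Sup ((\<lambda>v. sqrt (\<Sum>a<d. (cmod (\<Sum>b<d. x a b * v b))\<^sup>2))
                     ` {v. (\<Sum>b<d. (cmod (v b))\<^sup>2) \<le> 1})"

text \<open>embedding A_{1..n} into A_{1..m} (m \<ge> n): x \<mapsto> x \<otimes> 1\<close>
definition emb :: "nat \<Rightarrow> mat \<Rightarrow> mat" where
  "emb n x = (\<lambda>a b. if a div 2^n = b div 2^n then x (a mod 2^n) (b mod 2^n) else 0)"

text \<open>the 2x2 matrix h placed at site i (tensored with identities elsewhere)\<close>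
definition site_op :: "nat \<Rightarrow> mat \<Rightarrow> mat" where
  "site_op i h = (\<lambda>a b. if (\<forall>j. j \<noteq> i - 1 \<longrightarrow> bit a j = bit b j)
                        then h (of_bool (bit a (i - 1))) (of_bool (bit b (i - 1))) else 0)"

definition hloc :: "(nat \<Rightarrow> real) \<Rightarrow> nat \<Rightarrow> mat" where
  "hloc lam i = site_op i (\<lambda>p q. if p = 0 \<and> q = 0 then complex_of_real (lam i) else 0)"

definition Hmat :: "(nat \<Rightarrow> real) \<Rightarrow> nat \<Rightarrow> mat" where
  "Hmat lam n = (\<lambda>a b. \<Sum>i\<in>{1..n}. hloc lam i a b)"

text \<open>e^{itH_n}; H_n is diagonal, so its exponential is the diagonal matrix of exponentials\<close>
definition expH :: "(nat \<Rightarrow> real) \<Rightarrow> nat \<Rightarrow> real \<Rightarrow> mat" where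
  "expH lam n t = (\<lambda>a b. if a = b then exp (\<i> * complex_of_real t * Hmat lam n a a) else 0)"

definition is_uhf :: "(nat \<Rightarrow> mat) \<Rightarrow> bool" where
  "is_uhf X \<longleftrightarrow> (\<forall>e>0. \<exists>N. \<forall>n m. N \<le> n \<and> n \<le> m \<longrightarrow>
       opnorm (2^m) (mdiff (X m) (emb n (X n))) < e)"

definition anorm :: "(nat \<Rightarrow> mat) \<Rightarrow> real" where
  "anorm X = lim (\<lambda>n. opnorm (2^n) (X n))"

definition adiff :: "(nat \<Rightarrow> mat) \<Rightarrow> (nat \<Rightarrow> mat) \<Rightarrow> (nat \<Rightarrow> mat)" where
  "adiff X Y = (\<lambda>n. mdiff (X n) (Y n))"

definition ascale :: "complex \<Rightarrow> (nat \<Rightarrow> mat) \<Rightarrow> (nat \<Rightarrow> mat)" where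
  "ascale c X = (\<lambda>n a b. c * X n a b)"

definition alpha :: "(nat \<Rightarrow> real) \<Rightarrow> real \<Rightarrow> (nat \<Rightarrow> mat) \<Rightarrow> (nat \<Rightarrow> mat)" where
  "alpha lam t X = (\<lambda>n. mmul (2^n) (mmul (2^n) (expH lam n t) (X n)) (expH lam n (- t)))"

definition delta :: "(nat \<Rightarrow> real) \<Rightarrow> nat \<Rightarrow> (nat \<Rightarrow> mat) \<Rightarrow> (nat \<Rightarrow> mat)" where
  "delta lam k X = (\<lambda>m. (\<lambda>a b. \<i> * (mmul (2^m) (Hmat lam k) (X m) a b
                                     - mmul (2^m) (X m) (Hmat lam k) a b)))"

text \<open>x \<in> D(delta_alpha) with delta_alpha(x) = y\<close>
definition is_gen :: "(nat \<Rightarrow> real) \<Rightarrow> (nat \<Rightarrow> mat) \<Rightarrow> (nat \<Rightarrow> mat) \<Rightarrow> bool" where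
  "is_gen lam X Y \<longleftrightarrow> is_uhf X \<and> is_uhf Y \<and>
     ((\<lambda>t. anorm (adiff (ascale (complex_of_real (1 / t)) (adiff (alpha lam t X) X)) Y))
        \<longlongrightarrow> 0) (at 0)"

end

theory Submission
  imports Defs
begin

(*
  Each H_n is diagonal in the product basis, so alpha_t and delta_k act on matrix entries as
  Schur multipliers: the (a,b) entry is multiplied by exp(i t Omega(a,b)), resp. by
  i Omega_k(a,b), where Omega_k(a,b) = sum_{i<=k} lam_i s_i and s_i in {-1,0,1} records how the
  state at site i differs between a and b. Grouping the entries by their pattern s of site
  differences gives contractive projections P_s, on whose ranges delta_alpha is multiplication
  by i Omega(s). Hence |Omega(s)| ||P_s x|| = ||P_s delta(x)|| and
  ||P_s x|| <= ||delta^2(x)|| / Omega(s)^2.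

  If j is the last site with s_j <> 0, the growth condition gives |Omega(s)| >= 6^j, and there
  are 2 * 3^(j-1) such patterns. So sum_s 1/|Omega(s)| <= 1, and
  sum_s |Omega_l(s) - Omega_k(s)| / Omega(s)^2 <= 2^-k since only patterns with j > k
  contribute. Summing over the patterns supported in the first J sites and letting J tend to
  infinity gives both estimates. Finally, the matrix unit raising site j is an eigenvector of
  delta_alpha with eigenvalue i lam_j, and lam_j >= 6^j, so delta_alpha is unbounded.
*)

section \<open>Operator norm of finite matrices\<close>

definition sqnorm :: "nat \<Rightarrow> (nat \<Rightarrow> complex) \<Rightarrow> real" where
  "sqnorm d v = (\<Sum>b<d. (cmod (v b))\<^sup>2)"

definition mulvec :: "nat \<Rightarrow> mat \<Rightarrow> (nat \<Rightarrow> complex) \<Rightarrow> (nat \<Rightarrow> complex)" where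
  "mulvec d x v = (\<lambda>a. \<Sum>b<d. x a b * v b)"

lemma sqnorm_nonneg: "0 \<le> sqnorm d v" unfolding sqnorm_def by (simp add: sum_nonneg)

lemma opnorm_eq_Sup: "opnorm d x = Sup ((\<lambda>v. sqrt (sqnorm d (mulvec d x v))) ` {v. sqnorm d v \<le> 1})"
  unfolding opnorm_def sqnorm_def mulvec_def by simp

lemma cmod_mulvec_le: assumes "sqnorm d v \<le> 1" shows "cmod (mulvec d x v a) \<le> (\<Sum>b<d. cmod (x a b))"
proof -
  have "cmod (mulvec d x v a) \<le> (\<Sum>b<d. cmod (x a b * v b))" unfolding mulvec_def by (rule norm_sum)
  also have "\<dots> \<le> (\<Sum>b<d. cmod (x a b))"
  proof (rule sum_mono)
    fix b assume b: "b \<in> {..<d}"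
    have "(cmod (v b))\<^sup>2 \<le> sqnorm d v" unfolding sqnorm_def
      using b by (intro member_le_sum) auto
    hence "(cmod (v b))\<^sup>2 \<le> 1" using assms by linarith
    hence "cmod (v b) \<le> 1" by (simp add: power_le_one_iff)
    thus "cmod (x a b * v b) \<le> cmod (x a b)" by (simp add: norm_mult mult_left_le)
  qed
  finally show ?thesis .
qed

lemma sqrt_sqnorm_eq_L2_set: "sqrt (sqnorm d v) = L2_set (\<lambda>b. cmod (v b)) {..<d}"
  unfolding sqnorm_def L2_set_def by simp

lemma sqrt_sqnorm_mulvec_le: assumes "sqnorm d v \<le> 1" shows "sqrt (sqnorm d (mulvec d x v)) \<le> (\<Sum>a<d. \<Sum>b<d. cmod (x a b))"
proof -
  have "sqrt (sqnorm d (mulvec d x v)) = L2_set (\<lambda>a. cmod (mulvec d x v a)) {..<d}"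
    by (rule sqrt_sqnorm_eq_L2_set)
  also have "\<dots> \<le> (\<Sum>a<d. cmod (mulvec d x v a))" by (rule L2_set_le_sum) auto
  also have "\<dots> \<le> (\<Sum>a<d. \<Sum>b<d. cmod (x a b))" by (intro sum_mono cmod_mulvec_le assms)
  finally show ?thesis .
qed

lemma opnorm_bdd: "bdd_above ((\<lambda>v. sqrt (sqnorm d (mulvec d x v))) ` {v. sqnorm d v \<le> 1})"
  using sqrt_sqnorm_mulvec_le by (auto intro!: bdd_aboveI2)

lemma opnorm_ge: "sqnorm d v \<le> 1 \<Longrightarrow> sqrt (sqnorm d (mulvec d x v)) \<le> opnorm d x"
  unfolding opnorm_eq_Sup by (rule cSup_upper) (use opnorm_bdd in auto)

lemma sqnorm_zero_le_one: "sqnorm d (\<lambda>_. 0) \<le> 1" by (simp add: sqnorm_def)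

lemma opnorm_nonneg: "0 \<le> opnorm d x"
  using opnorm_ge[OF sqnorm_zero_le_one, of d x] by (meson order_trans real_sqrt_ge_zero sqnorm_nonneg)

lemma opnorm_le: assumes "\<And>v. sqnorm d v \<le> 1 \<Longrightarrow> sqrt (sqnorm d (mulvec d x v)) \<le> C"
  shows "opnorm d x \<le> C"
  unfolding opnorm_eq_Sup
proof (rule cSup_least)
  show "(\<lambda>v. sqrt (sqnorm d (mulvec d x v))) ` {v. sqnorm d v \<le> 1} \<noteq> {}" using sqnorm_zero_le_one by blast
next
  fix y assume "y \<in> (\<lambda>v. sqrt (sqnorm d (mulvec d x v))) ` {v. sqnorm d v \<le> 1}"
  then show "y \<le> C" using assms by auto
qed

lemma opnorm_le_sq: assumes "\<And>v. sqnorm d v \<le> 1 \<Longrightarrow> sqnorm d (mulvec d x v) \<le> C\<^sup>2" "0 \<le> C"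
  shows "opnorm d x \<le> C"
proof (rule opnorm_le)
  fix v assume "sqnorm d v \<le> 1"
  hence "sqrt (sqnorm d (mulvec d x v)) \<le> sqrt (C\<^sup>2)" using assms(1) by (intro real_sqrt_le_mono)
  thus "sqrt (sqnorm d (mulvec d x v)) \<le> C" using assms(2) by simp
qed

lemma sqnorm_mulvec_le_unit: "sqnorm d v \<le> 1 \<Longrightarrow> sqnorm d (mulvec d x v) \<le> (opnorm d x)\<^sup>2"
proof -
  assume "sqnorm d v \<le> 1"
  from opnorm_ge[OF this, of x] have "sqrt (sqnorm d (mulvec d x v)) \<le> opnorm d x" .
  hence "(sqrt (sqnorm d (mulvec d x v)))\<^sup>2 \<le> (opnorm d x)\<^sup>2" by (intro power_mono) (auto simp: sqnorm_nonneg)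
  thus ?thesis using sqnorm_nonneg[of d "mulvec d x v"] by simp
qed

lemma sqnorm_scale: "sqnorm d (\<lambda>b. c * v b) = (cmod c)\<^sup>2 * sqnorm d v"
  unfolding sqnorm_def by (simp add: norm_mult power_mult_distrib sum_distrib_left)

lemma mulvec_scale: "mulvec d x (\<lambda>b. c * v b) = (\<lambda>a. c * mulvec d x v a)"
  unfolding mulvec_def by (auto simp: sum_distrib_left ac_simps)

lemma sqnorm_eq_0_iff: "sqnorm d v = 0 \<longleftrightarrow> (\<forall>b<d. v b = 0)"
  unfolding sqnorm_def by (subst sum_nonneg_eq_0_iff) auto

lemma sqnorm_mulvec_le: "sqnorm d (mulvec d x v) \<le> (opnorm d x)\<^sup>2 * sqnorm d v"
proof (cases "sqnorm d v = 0")
  case True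
  hence "\<forall>b<d. v b = 0" by (simp add: sqnorm_eq_0_iff)
  hence "mulvec d x v = (\<lambda>a. 0)" unfolding mulvec_def by (auto intro!: sum.neutral)
  thus ?thesis using True by (simp add: sqnorm_def)
next
  case False
  hence pos: "sqnorm d v > 0" using sqnorm_nonneg[of d v] by linarith
  define c where "c = complex_of_real (1 / sqrt (sqnorm d v))"
  have "cmod c = 1 / sqrt (sqnorm d v)" using pos unfolding c_def by (simp add: norm_divide)
  hence cm: "(cmod c)\<^sup>2 = 1 / sqnorm d v" using pos by (simp add: power_divide)
  have "sqnorm d (\<lambda>b. c * v b) \<le> 1" using pos by (simp add: sqnorm_scale cm)
  from sqnorm_mulvec_le_unit[OF this, of x] have "(cmod c)\<^sup>2 * sqnorm d (mulvec d x v) \<le> (opnorm d x)\<^sup>2"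
    by (simp add: mulvec_scale sqnorm_scale)
  thus ?thesis using pos by (simp add: cm field_simps)
qed

lemma opnorm_cong: assumes "\<And>a b. a < d \<Longrightarrow> b < d \<Longrightarrow> x a b = y a b"
  shows "opnorm d x = opnorm d y"
proof -
  have "\<And>v. sqnorm d (mulvec d x v) = sqnorm d (mulvec d y v)" unfolding sqnorm_def mulvec_def
    using assms by (intro sum.cong) auto
  thus ?thesis unfolding opnorm_eq_Sup by simp
qed

lemma opnorm_add_le: "opnorm d (\<lambda>a b. x a b + y a b) \<le> opnorm d x + opnorm d y"
proof (rule opnorm_le)
  fix v assume v: "sqnorm d v \<le> 1"
  have "mulvec d (\<lambda>a b. x a b + y a b) v = (\<lambda>a. mulvec d x v a + mulvec d y v a)"
    unfolding mulvec_def by (auto simp: distrib_right sum.distrib)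
  hence "sqrt (sqnorm d (mulvec d (\<lambda>a b. x a b + y a b) v)) = L2_set (\<lambda>a. cmod (mulvec d x v a + mulvec d y v a)) {..<d}"
    by (simp add: sqrt_sqnorm_eq_L2_set)
  also have "\<dots> \<le> L2_set (\<lambda>a. cmod (mulvec d x v a) + cmod (mulvec d y v a)) {..<d}"
    by (rule L2_set_mono) (auto simp: norm_triangle_ineq)
  also have "\<dots> \<le> L2_set (\<lambda>a. cmod (mulvec d x v a)) {..<d} + L2_set (\<lambda>a. cmod (mulvec d y v a)) {..<d}"
    by (rule L2_set_triangle_ineq)
  also have "\<dots> \<le> opnorm d x + opnorm d y"
    using opnorm_ge[OF v, of x] opnorm_ge[OF v, of y] by (simp add: sqrt_sqnorm_eq_L2_set)
  finally show "sqrt (sqnorm d (mulvec d (\<lambda>a b. x a b + y a b) v)) \<le> opnorm d x + opnorm d y" .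
qed

lemma opnorm_scale_le: "opnorm d (\<lambda>a b. c * x a b) \<le> cmod c * opnorm d x"
proof (rule opnorm_le)
  fix v assume v: "sqnorm d v \<le> 1"
  have "mulvec d (\<lambda>a b. c * x a b) v = (\<lambda>a. c * mulvec d x v a)"
    unfolding mulvec_def by (auto simp: sum_distrib_left ac_simps)
  hence "sqnorm d (mulvec d (\<lambda>a b. c * x a b) v) = (cmod c)\<^sup>2 * sqnorm d (mulvec d x v)"
    by (simp add: sqnorm_scale)
  hence "sqrt (sqnorm d (mulvec d (\<lambda>a b. c * x a b) v)) = cmod c * sqrt (sqnorm d (mulvec d x v))"
    by (simp add: real_sqrt_mult)
  also have "\<dots> \<le> cmod c * opnorm d x"
    using opnorm_ge[OF v, of x] by (simp add: mult_left_mono)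
  finally show "sqrt (sqnorm d (mulvec d (\<lambda>a b. c * x a b) v)) \<le> cmod c * opnorm d x" .
qed

lemma opnorm_scale: "opnorm d (\<lambda>a b. c * x a b) = cmod c * opnorm d x"
proof (cases "c = 0")
  case True
  have "opnorm d (\<lambda>a b. c * x a b) \<le> 0" using opnorm_scale_le[of d c x] True by simp
  thus ?thesis using True opnorm_nonneg[of d "\<lambda>a b. c * x a b"] by simp
next
  case False
  have "opnorm d x = opnorm d (\<lambda>a b. (1/c) * (c * x a b))" using False by simp
  also have "\<dots> \<le> cmod (1/c) * opnorm d (\<lambda>a b. c * x a b)" by (rule opnorm_scale_le)
  finally have "cmod c * opnorm d x \<le> opnorm d (\<lambda>a b. c * x a b)"
    using False by (simp add: norm_divide field_simps)
  thus ?thesis using opnorm_scale_le[of d c x] by linarith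
qed

lemma opnorm_zero: "opnorm d (\<lambda>a b. 0) = 0"
  using opnorm_scale[of d 0 "\<lambda>a b. 0"] by simp

lemma opnorm_minus: "opnorm d (\<lambda>a b. - x a b) = opnorm d x"
  using opnorm_scale[of d "-1" x] by simp

lemma mdiff_eq_add_minus: "mdiff x y = (\<lambda>a b. x a b + (- y a b))" unfolding mdiff_def by auto

lemma opnorm_mdiff_le: "opnorm d (mdiff x y) \<le> opnorm d x + opnorm d y"
  unfolding mdiff_eq_add_minus using opnorm_add_le[of d x "\<lambda>a b. - y a b"] opnorm_minus[of d y] by simp

lemma opnorm_mdiff_commute: "opnorm d (mdiff x y) = opnorm d (mdiff y x)"
  using opnorm_minus[of d "mdiff x y"] unfolding mdiff_def by simp

lemma opnorm_mdiff_triangle: "opnorm d (mdiff x z) \<le> opnorm d (mdiff x y) + opnorm d (mdiff y z)"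
proof -
  have "mdiff x z = (\<lambda>a b. mdiff x y a b + mdiff y z a b)" unfolding mdiff_def by auto
  thus ?thesis using opnorm_add_le[of d "mdiff x y" "mdiff y z"] by simp
qed

lemma opnorm_sum_le: "finite S \<Longrightarrow> opnorm d (\<lambda>a b. \<Sum>e\<in>S. f e a b) \<le> (\<Sum>e\<in>S. opnorm d (f e))"
proof (induction S rule: finite_induct)
  case empty
  have "opnorm d (\<lambda>a b. 0) \<le> 0" using opnorm_scale[of d 0 "\<lambda>a b. 0"] by simp
  thus ?case by simp
next
  case (insert e S)
  have "opnorm d (\<lambda>a b. \<Sum>e\<in>insert e S. f e a b) = opnorm d (\<lambda>a b. f e a b + (\<Sum>e\<in>S. f e a b))"
    using insert by simp
  also have "\<dots> \<le> opnorm d (f e) + opnorm d (\<lambda>a b. \<Sum>e\<in>S. f e a b)" by (rule opnorm_add_le)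
  finally show ?case using insert by simp
qed

lemma sqnorm_diag_scale_le: assumes "\<And>b. b < d \<Longrightarrow> cmod (w b) \<le> W" "0 \<le> W"
  shows "sqnorm d (\<lambda>b. w b * v b) \<le> W\<^sup>2 * sqnorm d v"
  unfolding sqnorm_def sum_distrib_left
proof (rule sum_mono)
  fix b assume "b \<in> {..<d}"
  hence "(cmod (w b))\<^sup>2 \<le> W\<^sup>2" using assms by (intro power_mono) auto
  thus "(cmod (w b * v b))\<^sup>2 \<le> W\<^sup>2 * (cmod (v b))\<^sup>2"
    by (simp add: norm_mult power_mult_distrib mult_right_mono)
qed

lemma opnorm_diag_scale_le:
  assumes u: "\<And>a. a < d \<Longrightarrow> cmod (u a) \<le> U" and w: "\<And>b. b < d \<Longrightarrow> cmod (w b) \<le> W"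
    and U: "0 \<le> U" and W: "0 \<le> W"
  shows "opnorm d (\<lambda>a b. u a * w b * x a b) \<le> U * W * opnorm d x"
proof (rule opnorm_le_sq)
  fix v assume v: "sqnorm d v \<le> 1"
  have "mulvec d (\<lambda>a b. u a * w b * x a b) v = (\<lambda>a. u a * mulvec d x (\<lambda>b. w b * v b) a)"
    unfolding mulvec_def by (auto simp: sum_distrib_left ac_simps)
  hence "sqnorm d (mulvec d (\<lambda>a b. u a * w b * x a b) v) \<le> U\<^sup>2 * sqnorm d (mulvec d x (\<lambda>b. w b * v b))"
    using sqnorm_diag_scale_le[OF u U] by simp
  also have "\<dots> \<le> U\<^sup>2 * ((opnorm d x)\<^sup>2 * sqnorm d (\<lambda>b. w b * v b))"
    by (intro mult_left_mono sqnorm_mulvec_le) auto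
  also have "\<dots> \<le> U\<^sup>2 * ((opnorm d x)\<^sup>2 * (W\<^sup>2 * 1))"
    using sqnorm_diag_scale_le[OF w W, where v = v] v sqnorm_nonneg[of d v]
    by (intro mult_left_mono order_trans[OF _ mult_left_mono[OF v]]) auto
  also have "\<dots> = (U * W * opnorm d x)\<^sup>2" by (simp add: power_mult_distrib)
  finally show "sqnorm d (mulvec d (\<lambda>a b. u a * w b * x a b) v) \<le> (U * W * opnorm d x)\<^sup>2" .
qed (use U W opnorm_nonneg in simp)

lemma opnorm_ge_entry: assumes "a < d" "b < d" shows "cmod (x a b) \<le> opnorm d x"
proof -
  define v where "v c = (if c = b then 1 else (0::complex))" for c
  have "sqnorm d v = (\<Sum>c<d. if c = b then 1 else 0)"
    unfolding sqnorm_def v_def by (intro sum.cong) auto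
  hence v: "sqnorm d v = 1" using assms by simp
  have "mulvec d x v a = x a b" unfolding mulvec_def v_def using assms by (simp add: if_distrib cong: if_cong)
  hence "(cmod (x a b))\<^sup>2 \<le> sqnorm d (mulvec d x v)"
    unfolding sqnorm_def using assms member_le_sum[of a "{..<d}" "\<lambda>a. (cmod (mulvec d x v a))\<^sup>2"] by simp
  hence "cmod (x a b) \<le> sqrt (sqnorm d (mulvec d x v))" by (simp add: real_le_rsqrt)
  also have "\<dots> \<le> opnorm d x" by (rule opnorm_ge) (simp add: v)
  finally show ?thesis .
qed

lemma sum_shift_block: fixes N :: nat shows "sum f {k..<k+N} = (\<Sum>r<N. f (k + r))"
  by (induction N) (simp_all add: add.commute)

lemma sum_split_blocks: fixes f :: "nat \<Rightarrow> 'a::comm_monoid_add" shows "(\<Sum>a<Q*N. f a) = (\<Sum>q<Q. \<Sum>r<N. f (q*N + r))"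
  using sum.nat_group[of f N Q] by (simp add: sum_shift_block)

lemma opnorm_emb_ge: "opnorm (2^n) x \<le> opnorm (2^m) (emb n x)" if "n \<le> m"
proof (rule opnorm_le)
  fix v assume v: "sqnorm (2^n) v \<le> 1"
  define v' where "v' b = (if b < 2^n then v b else 0)" for b
  have sub: "{..<(2::nat)^n} \<subseteq> {..<2^m}" using that by (auto intro: order_less_le_trans)
  have "sqnorm (2^m) v' = sqnorm (2^n) v"
    unfolding sqnorm_def v'_def using sub
    by (intro sum.mono_neutral_cong_right) auto
  hence v': "sqnorm (2^m) v' \<le> 1" using v by simp
  have mvq: "mulvec (2^m) (emb n x) v' a = mulvec (2^n) x v a" if "a < 2^n" for a
    unfolding mulvec_def v'_def using sub that
    by (intro sum.mono_neutral_cong_right) (auto simp: emb_def)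
  have "sqnorm (2^n) (mulvec (2^n) x v) = (\<Sum>a<2^n. (cmod (mulvec (2^m) (emb n x) v' a))\<^sup>2)"
    unfolding sqnorm_def using mvq by simp
  also have "\<dots> \<le> sqnorm (2^m) (mulvec (2^m) (emb n x) v')"
    unfolding sqnorm_def using sub by (intro sum_mono2) auto
  finally have "sqrt (sqnorm (2^n) (mulvec (2^n) x v)) \<le> sqrt (sqnorm (2^m) (mulvec (2^m) (emb n x) v'))" by simp
  also have "\<dots> \<le> opnorm (2^m) (emb n x)" by (rule opnorm_ge[OF v'])
  finally show "sqrt (sqnorm (2^n) (mulvec (2^n) x v)) \<le> opnorm (2^m) (emb n x)" .
qed

lemma opnorm_emb_le: "opnorm (2^m) (emb n x) \<le> opnorm (2^n) x" if "n \<le> m"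
proof -
  define N where "N = (2::nat)^n"
  define Q where "Q = (2::nat)^(m-n)"
  have QN: "(2::nat)^m = Q * N" unfolding Q_def N_def using that by (simp flip: power_add)
  have "opnorm (Q*N) (emb n x) \<le> opnorm N x"
  proof (rule opnorm_le_sq)
    fix v assume v: "sqnorm (Q*N) v \<le> 1"
    define vq where "vq q s = v (q*N + s)" for q s
    have mvb: "mulvec (Q*N) (emb n x) v (q*N + r) = mulvec N x (vq q) r" if "q < Q" "r < N" for q r
    proof -
      have "mulvec (Q*N) (emb n x) v (q*N + r) = (\<Sum>q'<Q. \<Sum>s<N. emb n x (q*N + r) (q'*N + s) * v (q'*N+s))"
        unfolding mulvec_def by (rule sum_split_blocks)
      also have "\<dots> = (\<Sum>q'<Q. if q' = q then (\<Sum>s<N. x r s * vq q s) else 0)"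
        using that by (intro sum.cong refl) (auto simp: emb_def N_def[symmetric] vq_def intro!: sum.cong)
      also have "\<dots> = (\<Sum>s<N. x r s * vq q s)" using that by simp
      finally show ?thesis unfolding mulvec_def .
    qed
    have "sqnorm (Q*N) (mulvec (Q*N) (emb n x) v) = (\<Sum>q<Q. sqnorm N (mulvec N x (vq q)))"
      unfolding sqnorm_def by (subst sum_split_blocks) (auto simp: mvb intro!: sum.cong)
    also have "\<dots> \<le> (\<Sum>q<Q. (opnorm N x)\<^sup>2 * sqnorm N (vq q))"
      by (intro sum_mono sqnorm_mulvec_le)
    also have "\<dots> = (opnorm N x)\<^sup>2 * sqnorm (Q*N) v"
      unfolding sqnorm_def vq_def by (simp add: sum_distrib_left sum_split_blocks)
    also have "\<dots> \<le> (opnorm N x)\<^sup>2 * 1" by (intro mult_left_mono v) auto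
    finally show "sqnorm (Q*N) (mulvec (Q*N) (emb n x) v) \<le> (opnorm N x)\<^sup>2" by simp
  qed (rule opnorm_nonneg)
  thus ?thesis using QN N_def by simp
qed

lemma opnorm_emb: "n \<le> m \<Longrightarrow> opnorm (2^m) (emb n x) = opnorm (2^n) x"
  using opnorm_emb_le opnorm_emb_ge by (meson order_antisym)

section \<open>The norm of the UHF algebra\<close>

text \<open>A level-\<open>m\<close> matrix is a function on all of \<open>nat \<times> nat\<close>, but only its entries below
  \<open>2^m\<close> are meaningful; the notions below depend on nothing else.\<close>

definition entries_eq :: "(nat \<Rightarrow> mat) \<Rightarrow> (nat \<Rightarrow> mat) \<Rightarrow> bool" where
  "entries_eq X Y \<longleftrightarrow> (\<forall>m a b. a < 2^m \<longrightarrow> b < 2^m \<longrightarrow> X m a b = Y m a b)"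

lemma entries_eq_refl: "entries_eq X X" unfolding entries_eq_def by simp

lemma entries_eq_adiff: "entries_eq A A' \<Longrightarrow> entries_eq B B' \<Longrightarrow> entries_eq (adiff A B) (adiff A' B')"
  unfolding entries_eq_def adiff_def mdiff_def by simp

lemma is_uhf_cong: assumes "entries_eq X Y" shows "is_uhf X = is_uhf Y"
proof -
  have "opnorm (2^m) (mdiff (X m) (emb n (X n))) = opnorm (2^m) (mdiff (Y m) (emb n (Y n)))" for n m
    using assms unfolding entries_eq_def
    by (intro opnorm_cong) (auto simp: mdiff_def emb_def)
  thus ?thesis unfolding is_uhf_def by simp
qed

lemma anorm_cong: assumes "entries_eq X Y" shows "anorm X = anorm Y"
proof -
  have "opnorm (2^m) (X m) = opnorm (2^m) (Y m)" for m
    using assms unfolding entries_eq_def by (intro opnorm_cong) auto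
  thus ?thesis unfolding anorm_def by simp
qed

lemma tendsto_anorm: assumes "is_uhf X" shows "(\<lambda>m. opnorm (2^m) (X m)) \<longlonglongrightarrow> anorm X"
proof -
  have "Cauchy (\<lambda>m. opnorm (2^m) (X m))"
  proof (rule metric_CauchyI)
    fix e :: real assume e: "e > 0"
    then obtain N where N: "\<And>n m. N \<le> n \<Longrightarrow> n \<le> m \<Longrightarrow> opnorm (2^m) (mdiff (X m) (emb n (X n))) < e"
      using assms unfolding is_uhf_def by blast
    have *: "\<bar>opnorm (2^m) (X m) - opnorm (2^n) (X n)\<bar> < e" if "N \<le> n" "n \<le> m" for n m
    proof -
      have en: "opnorm (2^m) (emb n (X n)) = opnorm (2^n) (X n)" using that by (simp add: opnorm_emb)
      have "X m = (\<lambda>a b. mdiff (X m) (emb n (X n)) a b + emb n (X n) a b)" by (auto simp: mdiff_def)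
      hence a: "opnorm (2^m) (X m) \<le> opnorm (2^m) (mdiff (X m) (emb n (X n))) + opnorm (2^m) (emb n (X n))"
        using opnorm_add_le[of "2^m" "mdiff (X m) (emb n (X n))" "emb n (X n)"] by simp
      have "emb n (X n) = (\<lambda>a b. mdiff (emb n (X n)) (X m) a b + X m a b)" by (auto simp: mdiff_def)
      hence b: "opnorm (2^m) (emb n (X n)) \<le> opnorm (2^m) (mdiff (emb n (X n)) (X m)) + opnorm (2^m) (X m)"
        using opnorm_add_le[of "2^m" "mdiff (emb n (X n)) (X m)" "X m"] by simp
      show ?thesis using a b N[OF that] en opnorm_mdiff_commute[of "2^m" "X m" "emb n (X n)"] by linarith
    qed
    show "\<exists>M. \<forall>m\<ge>M. \<forall>n\<ge>M. dist (opnorm (2^m) (X m)) (opnorm (2^n) (X n)) < e"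
    proof (intro exI allI impI)
      fix m n assume "N \<le> m" "N \<le> n"
      thus "dist (opnorm (2^m) (X m)) (opnorm (2^n) (X n)) < e"
        using *[of n m] *[of m n] unfolding dist_real_def by (cases "n \<le> m") auto
    qed
  qed
  hence "convergent (\<lambda>m. opnorm (2^m) (X m))" by (simp add: Cauchy_convergent_iff)
  thus ?thesis unfolding anorm_def by (simp add: convergent_LIMSEQ_iff)
qed

lemma anorm_nonneg: "is_uhf X \<Longrightarrow> 0 \<le> anorm X"
  using tendsto_anorm[of X] by (rule LIMSEQ_le_const) (auto simp: opnorm_nonneg)

lemma anorm_le_eventually: assumes "is_uhf X" "is_uhf Y" "\<And>m. M \<le> m \<Longrightarrow> opnorm (2^m) (X m) \<le> C * opnorm (2^m) (Y m) + D"
  shows "anorm X \<le> C * anorm Y + D"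
proof (rule LIMSEQ_le[OF tendsto_anorm[OF assms(1)]])
  show "(\<lambda>m. C * opnorm (2^m) (Y m) + D) \<longlonglongrightarrow> C * anorm Y + D"
    by (intro tendsto_intros tendsto_anorm assms)
  show "\<exists>N. \<forall>n\<ge>N. opnorm (2^n) (X n) \<le> C * opnorm (2^n) (Y n) + D" using assms(3) by blast
qed

definition schur :: "mat \<Rightarrow> mat \<Rightarrow> mat" where
  "schur s w = (\<lambda>a b. s a b * w a b)"

definition consistent :: "(nat \<Rightarrow> mat) \<Rightarrow> bool" where
  "consistent s \<longleftrightarrow>
     (\<forall>m n a b. n \<le> m \<longrightarrow> a div 2^n = b div 2^n \<longrightarrow> s m a b = s n (a mod 2^n) (b mod 2^n))"

lemma schur_uhf: assumes c: "consistent s" and C: "0 \<le> C"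
  and bnd: "\<And>m w. opnorm (2^m) (schur (s m) w) \<le> C * opnorm (2^m) w" and X: "is_uhf X"
  shows "is_uhf (\<lambda>m. schur (s m) (X m))" "anorm (\<lambda>m. schur (s m) (X m)) \<le> C * anorm X"
proof -
  show U: "is_uhf (\<lambda>m. schur (s m) (X m))"
    unfolding is_uhf_def
  proof (intro allI impI)
    fix e :: real assume e: "e > 0"
    have e': "e / (C + 1) > 0" using e C by simp
    obtain N where N: "\<And>n m. N \<le> n \<Longrightarrow> n \<le> m \<Longrightarrow> opnorm (2^m) (mdiff (X m) (emb n (X n))) < e / (C + 1)"
      using X e' unfolding is_uhf_def by meson
    show "\<exists>N. \<forall>n m. N \<le> n \<and> n \<le> m \<longrightarrow> opnorm (2^m) (mdiff (schur (s m) (X m)) (emb n (schur (s n) (X n)))) < e"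
    proof (intro exI allI impI)
      fix n m assume nm: "N \<le> n \<and> n \<le> m"
      have "mdiff (schur (s m) (X m)) (emb n (schur (s n) (X n))) = schur (s m) (mdiff (X m) (emb n (X n)))"
        using c nm unfolding consistent_def schur_def mdiff_def emb_def by (intro ext) (auto simp: algebra_simps)
      hence "opnorm (2^m) (mdiff (schur (s m) (X m)) (emb n (schur (s n) (X n)))) \<le> C * opnorm (2^m) (mdiff (X m) (emb n (X n)))"
        using bnd by simp
      also have "\<dots> \<le> C * (e / (C + 1))" using N[of n m] nm C by (intro mult_left_mono) auto
      also have "\<dots> < e" using e C by (simp add: field_simps)
      finally show "opnorm (2^m) (mdiff (schur (s m) (X m)) (emb n (schur (s n) (X n)))) < e" .
    qed
  qed
  show "anorm (\<lambda>m. schur (s m) (X m)) \<le> C * anorm X"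
    using anorm_le_eventually[OF U X, of 0 C 0] bnd by simp
qed

lemma anorm_ge_entry: assumes "is_uhf X" "a < 2^n" "b < 2^n"
  and "\<And>m. n \<le> m \<Longrightarrow> X m a b = X n a b"
  shows "cmod (X n a b) \<le> anorm X"
proof (rule LIMSEQ_le_const[OF tendsto_anorm[OF assms(1)]], intro exI allI impI)
  fix m assume "n \<le> m"
  hence "(2::nat)^n \<le> 2^m" by (simp add: power_increasing)
  hence "a < 2^m" "b < 2^m" using assms(2,3) by linarith+
  hence "cmod (X m a b) \<le> opnorm (2^m) (X m)" by (rule opnorm_ge_entry)
  thus "cmod (X n a b) \<le> opnorm (2^m) (X m)" using assms(4)[OF \<open>n \<le> m\<close>] by simp
qed

lemma emb_mdiff: "emb n (mdiff x y) = mdiff (emb n x) (emb n y)"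
  unfolding emb_def mdiff_def by (intro ext) auto

lemma is_uhf_adiff: assumes "is_uhf X" "is_uhf Y" shows "is_uhf (adiff X Y)"
  unfolding is_uhf_def
proof (intro allI impI)
  fix e :: real assume e: "e > 0"
  obtain N1 where N1: "\<And>n m. N1 \<le> n \<Longrightarrow> n \<le> m \<Longrightarrow> opnorm (2^m) (mdiff (X m) (emb n (X n))) < e/2"
    using assms(1) e unfolding is_uhf_def by (meson half_gt_zero)
  obtain N2 where N2: "\<And>n m. N2 \<le> n \<Longrightarrow> n \<le> m \<Longrightarrow> opnorm (2^m) (mdiff (Y m) (emb n (Y n))) < e/2"
    using assms(2) e unfolding is_uhf_def by (meson half_gt_zero)
  show "\<exists>N. \<forall>n m. N \<le> n \<and> n \<le> m \<longrightarrow> opnorm (2^m) (mdiff (adiff X Y m) (emb n (adiff X Y n))) < e"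
  proof (intro exI allI impI)
    fix n m assume nm: "max N1 N2 \<le> n \<and> n \<le> m"
    have "mdiff (adiff X Y m) (emb n (adiff X Y n)) = mdiff (mdiff (X m) (emb n (X n))) (mdiff (Y m) (emb n (Y n)))"
      unfolding adiff_def emb_mdiff by (intro ext) (simp add: mdiff_def algebra_simps)
    hence "opnorm (2^m) (mdiff (adiff X Y m) (emb n (adiff X Y n)))
        \<le> opnorm (2^m) (mdiff (X m) (emb n (X n))) + opnorm (2^m) (mdiff (Y m) (emb n (Y n)))"
      by (simp add: opnorm_mdiff_le)
    thus "opnorm (2^m) (mdiff (adiff X Y m) (emb n (adiff X Y n))) < e"
      using N1[of n m] N2[of n m] nm by auto
  qed
qed

lemma is_uhf_ascale: assumes "is_uhf X" shows "is_uhf (ascale c X)"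
proof -
  have "consistent (\<lambda>m a b. c)" unfolding consistent_def by simp
  moreover have "opnorm (2^m) (schur (\<lambda>a b. c) w) \<le> cmod c * opnorm (2^m) w" for m w
    unfolding schur_def by (simp add: opnorm_scale)
  ultimately show ?thesis
    using schur_uhf(1)[of "\<lambda>m a b. c" "cmod c", OF _ _ _ assms] unfolding ascale_def schur_def by simp
qed

lemma anorm_ascale: assumes "is_uhf X" shows "anorm (ascale c X) = cmod c * anorm X"
proof -
  have "(\<lambda>m. opnorm (2^m) (ascale c X m)) = (\<lambda>m. cmod c * opnorm (2^m) (X m))"
    unfolding ascale_def by (simp add: opnorm_scale)
  moreover have "(\<lambda>m. cmod c * opnorm (2^m) (X m)) \<longlonglongrightarrow> cmod c * anorm X"
    by (intro tendsto_intros tendsto_anorm assms)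
  ultimately show ?thesis using tendsto_anorm[OF is_uhf_ascale[OF assms, of c]] LIMSEQ_unique by metis
qed

lemma adiff_ascale: "adiff (ascale c X) (ascale d X) = ascale (c - d) X"
  unfolding adiff_def ascale_def mdiff_def by (auto simp: fun_eq_iff algebra_simps)

lemma anorm_adiff_triangle: assumes "is_uhf X" "is_uhf Y" "is_uhf Z"
  shows "anorm (adiff X Z) \<le> anorm (adiff X Y) + anorm (adiff Y Z)"
proof -
  have "anorm (adiff X Z) \<le> 1 * anorm (adiff X Y) + (anorm (adiff Y Z))"
  proof (rule LIMSEQ_le[OF tendsto_anorm[OF is_uhf_adiff[OF assms(1,3)]]])
    show "(\<lambda>m. 1 * opnorm (2^m) (adiff X Y m) + opnorm (2^m) (adiff Y Z m)) \<longlonglongrightarrow> 1 * anorm (adiff X Y) + anorm (adiff Y Z)"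
      by (intro tendsto_intros tendsto_anorm is_uhf_adiff assms)
    show "\<exists>N. \<forall>n\<ge>N. opnorm (2^n) (adiff X Z n) \<le> 1 * opnorm (2^n) (adiff X Y n) + opnorm (2^n) (adiff Y Z n)"
      unfolding adiff_def by (auto intro: opnorm_mdiff_triangle)
  qed
  thus ?thesis by simp
qed

lemma anorm_adiff_commute: "anorm (adiff X Y) = anorm (adiff Y X)"
  unfolding anorm_def adiff_def by (subst opnorm_mdiff_commute) simp

lemma anorm_le_adiff: assumes "is_uhf X" "is_uhf Y"
  shows "anorm X \<le> anorm (adiff X Y) + anorm Y"
proof -
  have "anorm X \<le> 1 * anorm (adiff X Y) + anorm Y"
  proof (rule LIMSEQ_le[OF tendsto_anorm[OF assms(1)]])
    show "(\<lambda>m. 1 * opnorm (2^m) (adiff X Y m) + opnorm (2^m) (Y m)) \<longlonglongrightarrow> 1 * anorm (adiff X Y) + anorm Y"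
      by (intro tendsto_intros tendsto_anorm is_uhf_adiff assms)
    show "\<exists>N. \<forall>n\<ge>N. opnorm (2^n) (X n) \<le> 1 * opnorm (2^n) (adiff X Y n) + opnorm (2^n) (Y n)"
    proof (intro exI allI impI)
      fix n
      have "X n = (\<lambda>a b. adiff X Y n a b + Y n a b)" unfolding adiff_def mdiff_def by auto
      thus "opnorm (2^n) (X n) \<le> 1 * opnorm (2^n) (adiff X Y n) + opnorm (2^n) (Y n)"
        using opnorm_add_le[of "2^n" "adiff X Y n" "Y n"] by simp
    qed
  qed
  thus ?thesis by simp
qed

lemma anorm_eq_if_anorm_adiff_eq_0: assumes "is_uhf X" "is_uhf Y" "anorm (adiff X Y) = 0"
  shows "anorm X = anorm Y"
  using anorm_le_adiff[OF assms(1,2)] anorm_le_adiff[OF assms(2,1)] assms(3) anorm_adiff_commute[of X Y]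
  by linarith

section \<open>The dynamics as Schur multipliers\<close>

text \<open>\<open>site_diff a b i\<close> is the change of the state at site \<open>i\<close> between the basis vectors
  \<open>a\<close> and \<open>b\<close>; the symbols of \<open>alpha_t\<close> and \<open>delta_k\<close> at entry \<open>(a, b)\<close> depend on
  these changes only.\<close>

definition site_diff :: "nat \<Rightarrow> nat \<Rightarrow> nat \<Rightarrow> int" where
  "site_diff a b i = of_bool (bit b (i - 1)) - of_bool (bit a (i - 1))"

lemma bit_mod_pow: "bit ((a::nat) mod 2^n) j \<longleftrightarrow> j < n \<and> bit a j"
  by (simp flip: take_bit_eq_mod add: bit_take_bit_iff)

lemma bit_div_pow: "bit ((a::nat) div 2^n) k \<longleftrightarrow> bit a (n + k)"
  by (simp flip: drop_bit_eq_div add: bit_drop_bit_eq)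

lemma bit_high_eq: assumes "(a::nat) div 2^n = b div 2^n" "n \<le> j" shows "bit a j = bit b j"
proof -
  have "bit a j = bit (a div 2^n) (j - n)" using assms(2) by (simp add: bit_div_pow)
  also have "\<dots> = bit (b div 2^n) (j - n)" using assms(1) by simp
  also have "\<dots> = bit b j" using assms(2) by (simp add: bit_div_pow)
  finally show ?thesis .
qed

lemma bit_small: assumes "(a::nat) < 2^m" "m \<le> j" shows "\<not> bit a j"
proof -
  have "\<not> bit (a mod 2^m) j" using assms(2) by (simp add: bit_mod_pow)
  thus ?thesis using assms(1) by simp
qed

lemma site_diff_mod: assumes "a div 2^n = b div 2^n" shows "site_diff a b i = site_diff (a mod 2^n) (b mod 2^n) i"
  using bit_high_eq[OF assms, of "i - 1"] unfolding site_diff_def by (auto simp: bit_mod_pow)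

lemma site_diff_mod_fun: assumes "a div 2^n = b div 2^n" shows "site_diff a b = site_diff (a mod 2^n) (b mod 2^n)"
  using site_diff_mod[OF assms] by auto

lemma site_diff_high: assumes "a div 2^n = b div 2^n" "n < i" shows "site_diff a b i = 0"
  using bit_high_eq[OF assms(1), of "i - 1"] assms(2) unfolding site_diff_def by auto

lemma site_diff_high_ex: assumes "a div 2^n \<noteq> b div 2^n" shows "\<exists>i>n. site_diff a b i \<noteq> 0"
proof (rule ccontr)
  assume "\<not> (\<exists>i>n. site_diff a b i \<noteq> 0)"
  have "bit a (n + k) = bit b (n + k)" for k
  proof -
    have "site_diff a b (Suc (n + k)) = 0" using \<open>\<not> (\<exists>i>n. site_diff a b i \<noteq> 0)\<close> by simp
    thus ?thesis unfolding site_diff_def by (cases "bit a (n + k)"; cases "bit b (n + k)") auto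
  qed
  hence "a div 2^n = b div 2^n" by (simp add: bit_eq_iff bit_div_pow)
  thus False using assms by simp
qed

lemma site_diff_small: assumes "a < 2^m" "b < 2^m" "m < i" shows "site_diff a b i = 0"
  using bit_small[OF assms(1), of "i - 1"] bit_small[OF assms(2), of "i - 1"] assms(3) unfolding site_diff_def by auto

lemma site_diff_range: "site_diff a b i \<in> {-1, 0, 1}"
  unfolding site_diff_def by auto

definition freq_on :: "(nat \<Rightarrow> real) \<Rightarrow> nat set \<Rightarrow> (nat \<Rightarrow> int) \<Rightarrow> real" where
  "freq_on lam S e = (\<Sum>i\<in>S. lam i * of_int (e i))"

definition freq :: "(nat \<Rightarrow> real) \<Rightarrow> nat \<Rightarrow> (nat \<Rightarrow> int) \<Rightarrow> real" where
  "freq lam J = freq_on lam {1..J}"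

lemma freq_cong: "(\<And>i. 1 \<le> i \<Longrightarrow> i \<le> J \<Longrightarrow> e i = e' i) \<Longrightarrow> freq lam J e = freq lam J e'"
  unfolding freq_def freq_on_def by (intro sum.cong) auto

lemma freq_beyond: "(\<And>i. n < i \<Longrightarrow> e i = 0) \<Longrightarrow> n \<le> m \<Longrightarrow> freq lam m e = freq lam n e"
  unfolding freq_def freq_on_def by (intro sum.mono_neutral_right) auto

lemma freq_zero: "freq lam J (\<lambda>_. 0) = 0" unfolding freq_def freq_on_def by simp

lemma freq_diff: assumes "k \<le> l" shows "freq lam l e - freq lam k e = freq_on lam {k<..l} e"
proof -
  have "{1..l} = {1..k} \<union> {k<..l}" using assms by auto
  thus ?thesis unfolding freq_def freq_on_def by (simp add: sum.union_disjoint ivl_disj_int)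
qed

definition energy :: "(nat \<Rightarrow> real) \<Rightarrow> nat \<Rightarrow> nat \<Rightarrow> real" where
  "energy lam k a = (\<Sum>i\<in>{1..k}. if bit a (i - 1) then 0 else lam i)"

lemma hloc_eq: "hloc lam i a b = (if a = b \<and> \<not> bit a (i - 1) then complex_of_real (lam i) else 0)"
proof (cases "a = b")
  case True thus ?thesis unfolding hloc_def site_op_def by auto
next
  case False
  show ?thesis
  proof (cases "\<forall>j. j \<noteq> i - 1 \<longrightarrow> bit a j = bit b j")
    case True
    have "bit a (i - 1) \<noteq> bit b (i - 1)"
    proof
      assume "bit a (i - 1) = bit b (i - 1)"
      hence "\<forall>j. bit a j = bit b j" using True by metis
      thus False using False bit_eq_iff by blast
    qed
    thus ?thesis using False True unfolding hloc_def site_op_def by auto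
  next
    case False2: False
    thus ?thesis using False unfolding hloc_def site_op_def by auto
  qed
qed

lemma Hmat_eq: "Hmat lam k a b = (if a = b then complex_of_real (energy lam k a) else 0)"
  unfolding Hmat_def energy_def by (auto simp: hloc_eq intro!: sum.cong)

lemma energy_diff: "energy lam k a - energy lam k b = freq lam k (site_diff a b)"
  unfolding energy_def site_diff_def freq_def freq_on_def sum_subtractf[symmetric] by (intro sum.cong) auto

lemma mmul_diag_left: assumes "\<And>a b. a \<noteq> b \<Longrightarrow> D a b = 0" "a < d"
  shows "mmul d D w a b = D a a * w a b"
proof -
  have "mmul d D w a b = (\<Sum>c\<in>{a}. D a c * w c b)"
    unfolding mmul_def using assms by (intro sum.mono_neutral_cong_right) auto
  thus ?thesis by simp
qed

lemma mmul_diag_right: assumes "\<And>a b. a \<noteq> b \<Longrightarrow> D a b = 0" "b < d"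
  shows "mmul d w D a b = w a b * D b b"
proof -
  have "mmul d w D a b = (\<Sum>c\<in>{b}. w a c * D c b)"
    unfolding mmul_def using assms by (intro sum.mono_neutral_cong_right) auto
  thus ?thesis by simp
qed

definition alpha_symbol :: "(nat \<Rightarrow> real) \<Rightarrow> real \<Rightarrow> nat \<Rightarrow> mat" where
  "alpha_symbol lam t m a b = exp (\<i> * complex_of_real (t * freq lam m (site_diff a b)))"

definition delta_symbol :: "(nat \<Rightarrow> real) \<Rightarrow> nat \<Rightarrow> mat" where
  "delta_symbol lam k a b = \<i> * complex_of_real (freq lam k (site_diff a b))"

lemma alpha_eq_schur: "entries_eq (alpha lam t X) (\<lambda>m. schur (alpha_symbol lam t m) (X m))"
  unfolding entries_eq_def
proof (intro allI impI)
  fix m a b :: nat assume ab: "a < 2^m" "b < 2^m"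
  have d: "\<And>a b. a \<noteq> b \<Longrightarrow> expH lam m s a b = 0" for s unfolding expH_def by auto
  have "alpha lam t X m a b = (expH lam m t a a * X m a b) * expH lam m (-t) b b"
    unfolding alpha_def using ab
    by (simp add: mmul_diag_right[OF d] mmul_diag_left[OF d])
  also have "\<dots> = alpha_symbol lam t m a b * X m a b"
    unfolding expH_def alpha_symbol_def Hmat_eq energy_diff[symmetric]
    by (simp add: exp_diff[symmetric] mult_exp_exp[symmetric] algebra_simps flip: exp_add)
  finally show "alpha lam t X m a b = schur (alpha_symbol lam t m) (X m) a b" unfolding schur_def .
qed

lemma delta_eq_schur: "entries_eq (delta lam k X) (\<lambda>m. schur (delta_symbol lam k) (X m))"
  unfolding entries_eq_def
proof (intro allI impI)
  fix m a b :: nat assume ab: "a < 2^m" "b < 2^m"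
  have d: "\<And>a b. a \<noteq> b \<Longrightarrow> Hmat lam k a b = 0" unfolding Hmat_eq by auto
  show "delta lam k X m a b = schur (delta_symbol lam k) (X m) a b"
    unfolding delta_def schur_def delta_symbol_def energy_diff[symmetric] using ab
    by (simp add: mmul_diag_right[OF d] mmul_diag_left[OF d] Hmat_eq algebra_simps)
qed

lemma consistent_site_diff: "consistent (\<lambda>m a b. g (site_diff a b))"
  unfolding consistent_def using site_diff_mod_fun by metis

lemma consistent_delta_symbol: "consistent (\<lambda>m. delta_symbol lam k)"
  unfolding delta_symbol_def by (rule consistent_site_diff[where g = "\<lambda>c. \<i> * complex_of_real (freq lam k c)"])

lemma consistent_alpha_symbol: "consistent (alpha_symbol lam t)"
  unfolding consistent_def
proof (intro allI impI)
  fix m n a b :: nat assume "n \<le> m" and ab: "a div 2^n = b div 2^n"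
  have "freq lam m (site_diff a b) = freq lam n (site_diff a b)"
    using site_diff_high[OF ab] \<open>n \<le> m\<close> by (intro freq_beyond) auto
  hence "freq lam m (site_diff a b) = freq lam n (site_diff (a mod 2^n) (b mod 2^n))"
    unfolding site_diff_mod_fun[OF ab, symmetric] .
  thus "alpha_symbol lam t m a b = alpha_symbol lam t n (a mod 2^n) (b mod 2^n)"
    unfolding alpha_symbol_def by simp
qed

lemma opnorm_alpha_symbol_le: "opnorm d (schur (alpha_symbol lam t m) w) \<le> opnorm d w"
proof -
  define u where "u a = exp (\<i> * complex_of_real (t * energy lam m a))" for a
  define v where "v b = exp (- (\<i> * complex_of_real (t * energy lam m b)))" for b
  have "schur (alpha_symbol lam t m) w = (\<lambda>a b. u a * v b * w a b)"
    unfolding schur_def alpha_symbol_def energy_diff[symmetric] u_def v_def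
    by (intro ext) (simp add: algebra_simps flip: exp_add)
  moreover have "opnorm d (\<lambda>a b. u a * v b * w a b) \<le> 1 * 1 * opnorm d w"
    by (rule opnorm_diag_scale_le) (auto simp: u_def v_def norm_exp_i_times norm_exp)
  ultimately show ?thesis by simp
qed

lemma is_uhf_alpha: assumes "is_uhf X" shows "is_uhf (alpha lam t X)"
proof -
  have "is_uhf (\<lambda>m. schur (alpha_symbol lam t m) (X m))"
    using schur_uhf(1)[OF consistent_alpha_symbol, of 1] opnorm_alpha_symbol_le assms by simp
  thus ?thesis using is_uhf_cong[OF alpha_eq_schur] by blast
qed

lemma energy_bounds: assumes "\<forall>i\<ge>1. 0 \<le> lam i"
  shows "0 \<le> energy lam k a" "energy lam k a \<le> (\<Sum>i\<in>{1..k}. lam i)"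
  using assms unfolding energy_def by (auto intro!: sum_nonneg sum_mono)

lemma opnorm_delta_symbol_le: assumes "\<forall>i\<ge>1. 0 \<le> lam i"
  shows "opnorm d (schur (delta_symbol lam k) w) \<le> (2 * (\<Sum>i\<in>{1..k}. lam i)) * opnorm d w"
proof -
  define L where "L = (\<Sum>i\<in>{1..k}. lam i)"
  define u where "u a = \<i> * complex_of_real (energy lam k a)" for a
  have L: "0 \<le> L" unfolding L_def using assms by (auto intro!: sum_nonneg)
  have u: "cmod (u a) \<le> L" for a using energy_bounds[OF assms] unfolding u_def L_def by (simp add: norm_mult)
  have "schur (delta_symbol lam k) w = (\<lambda>a b. u a * 1 * w a b + 1 * (- u b) * w a b)"
    unfolding schur_def delta_symbol_def energy_diff[symmetric] u_def by (intro ext) (simp add: algebra_simps)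
  hence "opnorm d (schur (delta_symbol lam k) w)
      \<le> opnorm d (\<lambda>a b. u a * 1 * w a b) + opnorm d (\<lambda>a b. 1 * (- u b) * w a b)"
    using opnorm_add_le[of d "\<lambda>a b. u a * 1 * w a b" "\<lambda>a b. 1 * (- u b) * w a b"] by simp
  also have "opnorm d (\<lambda>a b. u a * 1 * w a b) \<le> L * 1 * opnorm d w"
    using u L by (intro opnorm_diag_scale_le) auto
  also have "opnorm d (\<lambda>a b. 1 * (- u b) * w a b) \<le> 1 * L * opnorm d w"
    using u L by (intro opnorm_diag_scale_le) auto
  finally show ?thesis unfolding L_def by (simp add: algebra_simps)
qed

lemma is_uhf_delta: assumes "\<forall>i\<ge>1. 0 \<le> lam i" "is_uhf X" shows "is_uhf (delta lam k X)"
proof -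
  have "0 \<le> 2 * (\<Sum>i\<in>{1..k}. lam i)" using assms by (auto intro!: sum_nonneg)
  hence "is_uhf (\<lambda>m. schur (delta_symbol lam k) (X m))"
    using schur_uhf(1)[OF consistent_delta_symbol, of "2 * (\<Sum>i\<in>{1..k}. lam i)"]
      opnorm_delta_symbol_le[OF assms(1)] assms(2) by simp
  thus ?thesis using is_uhf_cong[OF delta_eq_schur] by blast
qed

section \<open>Spectral sectors\<close>

definition site_mask :: "nat \<Rightarrow> int \<Rightarrow> mat" where
  "site_mask i v a b = (if site_diff a b i = v then 1 else 0)"

definition sites_mask :: "nat set \<Rightarrow> (nat \<Rightarrow> int) \<Rightarrow> mat" where
  "sites_mask S c a b = (if \<forall>i\<in>S. site_diff a b i = c i then 1 else 0)"

lemma opnorm_site_mask_le: "opnorm d (schur (site_mask i v) w) \<le> opnorm d w"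
proof -
  consider "v = 1" | "v = -1" | "v = 0" | "v \<notin> {-1,0,1}" by auto
  thus ?thesis
  proof cases
    case 1
    have "schur (site_mask i v) w = (\<lambda>a b. of_bool (\<not> bit a (i - 1)) * of_bool (bit b (i - 1)) * w a b)"
      unfolding schur_def site_mask_def site_diff_def 1 by (intro ext) auto
    thus ?thesis using opnorm_diag_scale_le[of d "\<lambda>a. of_bool (\<not> bit a (i - 1))" 1 "\<lambda>b. of_bool (bit b (i - 1))" 1 w] by simp
  next
    case 2
    have "schur (site_mask i v) w = (\<lambda>a b. of_bool (bit a (i - 1)) * of_bool (\<not> bit b (i - 1)) * w a b)"
      unfolding schur_def site_mask_def site_diff_def 2 by (intro ext) auto
    thus ?thesis using opnorm_diag_scale_le[of d "\<lambda>a. of_bool (bit a (i - 1))" 1 "\<lambda>b. of_bool (\<not> bit b (i - 1))" 1 w] by simp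
  next
    case 3 \<comment> \<open>average of \<open>w\<close> and its conjugate by the diagonal sign unitary at site \<open>i\<close>\<close>
    define s where "s a = (if bit a (i - 1) then -1 else (1::complex))" for a :: nat
    have "schur (site_mask i v) w = (\<lambda>a b. (1/2) * w a b + (1/2) * (s a * s b * w a b))"
      unfolding schur_def site_mask_def site_diff_def 3 s_def by (intro ext) auto
    hence "opnorm d (schur (site_mask i v) w) \<le> opnorm d (\<lambda>a b. (1/2) * w a b) + opnorm d (\<lambda>a b. (1/2) * (s a * s b * w a b))"
      using opnorm_add_le[of d "\<lambda>a b. (1/2) * w a b" "\<lambda>a b. (1/2) * (s a * s b * w a b)"] by simp
    also have "\<dots> = (1/2) * opnorm d w + (1/2) * opnorm d (\<lambda>a b. s a * s b * w a b)"
      by (simp only: opnorm_scale) simp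
    also have "opnorm d (\<lambda>a b. s a * s b * w a b) \<le> 1 * 1 * opnorm d w"
      by (rule opnorm_diag_scale_le) (auto simp: s_def)
    finally show ?thesis by simp
  next
    case 4
    have "site_diff a b i \<noteq> v" for a b using site_diff_range[of a b i] 4 by auto
    hence "schur (site_mask i v) w = (\<lambda>a b. 0)" unfolding schur_def site_mask_def by auto
    thus ?thesis using opnorm_nonneg by (simp add: opnorm_zero)
  qed
qed

lemma opnorm_sites_mask_le: "finite S \<Longrightarrow> opnorm d (schur (sites_mask S c) w) \<le> opnorm d w"
proof (induction S rule: finite_induct)
  case empty
  have "schur (sites_mask {} c) w = w" unfolding schur_def sites_mask_def by auto
  thus ?case by simp
next
  case (insert i S)
  have "schur (sites_mask (insert i S) c) w = schur (site_mask i (c i)) (schur (sites_mask S c) w)"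
    unfolding schur_def sites_mask_def site_mask_def by (intro ext) auto
  thus ?case using opnorm_site_mask_le[of d i "c i" "schur (sites_mask S c) w"] insert by simp
qed

definition sector_mask :: "(nat \<Rightarrow> int) \<Rightarrow> mat" where
  "sector_mask e a b = (if \<forall>i\<ge>1. site_diff a b i = e i then 1 else 0)"

definition local_mask :: "nat \<Rightarrow> mat" where
  "local_mask J a b = (if \<forall>i>J. site_diff a b i = 0 then 1 else 0)"

lemma sector_mask_0: "\<not> (\<forall>i\<ge>1. site_diff a b i = e i) \<Longrightarrow> sector_mask e a b = 0" unfolding sector_mask_def by simp

lemma opnorm_sector_mask_le: "opnorm (2^m) (schur (sector_mask e) w) \<le> opnorm (2^m) w"
proof (cases "\<forall>i>m. e i = 0")
  case True
  have "opnorm (2^m) (schur (sector_mask e) w) = opnorm (2^m) (schur (sites_mask {1..m} e) w)"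
  proof (rule opnorm_cong)
    fix a b :: nat assume ab: "a < 2^m" "b < 2^m"
    have "(\<forall>i\<ge>1. site_diff a b i = e i) \<longleftrightarrow> (\<forall>i\<in>{1..m}. site_diff a b i = e i)"
      using site_diff_small[OF ab] True by (metis atLeastAtMost_iff not_le)
    thus "schur (sector_mask e) w a b = schur (sites_mask {1..m} e) w a b" unfolding schur_def sector_mask_def sites_mask_def by simp
  qed
  thus ?thesis using opnorm_sites_mask_le by simp
next
  case False
  then obtain j where j: "j > m" "e j \<noteq> 0" by auto
  have "opnorm (2^m) (schur (sector_mask e) w) = opnorm (2^m) (\<lambda>a b. 0)"
  proof (rule opnorm_cong)
    fix a b :: nat assume ab: "a < 2^m" "b < 2^m"
    have "site_diff a b j = 0" using site_diff_small[OF ab j(1)] .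
    thus "schur (sector_mask e) w a b = 0" unfolding schur_def sector_mask_def using j by auto
  qed
  thus ?thesis using opnorm_nonneg by (simp add: opnorm_zero)
qed

lemma opnorm_local_mask_le: "opnorm (2^m) (schur (local_mask J) w) \<le> opnorm (2^m) w"
proof -
  have "opnorm (2^m) (schur (local_mask J) w) = opnorm (2^m) (schur (sites_mask {J<..m} (\<lambda>_. 0)) w)"
  proof (rule opnorm_cong)
    fix a b :: nat assume ab: "a < 2^m" "b < 2^m"
    have "(\<forall>i>J. site_diff a b i = 0) \<longleftrightarrow> (\<forall>i\<in>{J<..m}. site_diff a b i = 0)"
      using site_diff_small[OF ab] by (metis greaterThanAtMost_iff not_le)
    thus "schur (local_mask J) w a b = schur (sites_mask {J<..m} (\<lambda>_. 0)) w a b" unfolding schur_def local_mask_def sites_mask_def by simp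
  qed
  thus ?thesis using opnorm_sites_mask_le by simp
qed

lemma consistent_sector_mask: "consistent (\<lambda>m. sector_mask e)"
  unfolding sector_mask_def by (rule consistent_site_diff[where g = "\<lambda>c. if \<forall>i\<ge>1. c i = e i then 1 else 0"])

lemma consistent_local_mask: "consistent (\<lambda>m. local_mask J)"
  unfolding local_mask_def by (rule consistent_site_diff[where g = "\<lambda>c. if \<forall>i>J. c i = 0 then 1 else 0"])

definition sector_proj :: "(nat \<Rightarrow> int) \<Rightarrow> (nat \<Rightarrow> mat) \<Rightarrow> (nat \<Rightarrow> mat)" where
  "sector_proj e X = (\<lambda>m. schur (sector_mask e) (X m))"

definition local_proj :: "nat \<Rightarrow> (nat \<Rightarrow> mat) \<Rightarrow> (nat \<Rightarrow> mat)" where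
  "local_proj J X = (\<lambda>m. schur (local_mask J) (X m))"

lemma is_uhf_sector_proj: "is_uhf X \<Longrightarrow> is_uhf (sector_proj e X)"
  unfolding sector_proj_def using schur_uhf(1)[OF consistent_sector_mask, of 1] opnorm_sector_mask_le by simp

lemma anorm_sector_proj_le: "is_uhf X \<Longrightarrow> anorm (sector_proj e X) \<le> anorm X"
  unfolding sector_proj_def using schur_uhf(2)[OF consistent_sector_mask, of 1] opnorm_sector_mask_le by simp

lemma is_uhf_local_proj: "is_uhf X \<Longrightarrow> is_uhf (local_proj J X)"
  unfolding local_proj_def using schur_uhf(1)[OF consistent_local_mask, of 1] opnorm_local_mask_le by simp

lemma sector_proj_adiff: "sector_proj e (adiff X Y) = adiff (sector_proj e X) (sector_proj e Y)"
  unfolding sector_proj_def adiff_def schur_def mdiff_def by (auto simp: fun_eq_iff algebra_simps)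

text \<open>Patterns of site differences supported on the sites \<open>1..J\<close>; as sites are numbered from 1,
  index 0 is unused and fixed to 0.\<close>

definition sectors :: "nat \<Rightarrow> (nat \<Rightarrow> int) set" where
  "sectors J = {e. (\<forall>i. e i \<in> {-1, 0, 1}) \<and> (\<forall>i. (i = 0 \<or> J < i) \<longrightarrow> e i = 0)}"

lemma sectors_0: "sectors 0 = {\<lambda>_. 0}"
  unfolding sectors_def by (auto simp: fun_eq_iff)

lemma sectors_upd: "e \<in> sectors J \<Longrightarrow> c \<in> {-1,0,1} \<Longrightarrow> e(Suc J := c) \<in> sectors (Suc J)"
  unfolding sectors_def by auto

lemma sectors_Suc_eq_0: "e \<in> sectors J \<Longrightarrow> e (Suc J) = 0"
  unfolding sectors_def by auto

lemma sectors_mono: "e \<in> sectors J \<Longrightarrow> J \<le> K \<Longrightarrow> e \<in> sectors K"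
  unfolding sectors_def by auto

lemma sectors_Suc: "sectors (Suc J) = sectors J \<union> (\<lambda>e. e(Suc J := 1)) ` sectors J \<union> (\<lambda>e. e(Suc J := -1)) ` sectors J"
proof (intro equalityI subsetI)
  fix e assume e: "e \<in> sectors (Suc J)"
  define e0 where "e0 = e(Suc J := 0)"
  have e0: "e0 \<in> sectors J" using e unfolding sectors_def e0_def by auto
  have r: "e (Suc J) \<in> {-1,0,1}" using e unfolding sectors_def by auto
  have ee: "e = e0(Suc J := e (Suc J))" unfolding e0_def by auto
  have e00: "e0(Suc J := 0) = e0" unfolding e0_def by auto
  from r consider "e (Suc J) = 0" | "e (Suc J) = 1" | "e (Suc J) = -1" by auto
  thus "e \<in> sectors J \<union> (\<lambda>e. e(Suc J := 1)) ` sectors J \<union> (\<lambda>e. e(Suc J := -1)) ` sectors J"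
  proof cases
    case 1 hence "e = e0" using ee e00 by simp
    thus ?thesis using e0 by simp
  next
    case 2 hence "e = e0(Suc J := 1)" using ee by simp
    thus ?thesis using e0 by blast
  next
    case 3 hence "e = e0(Suc J := -1)" using ee by simp
    thus ?thesis using e0 by blast
  qed
next
  fix e assume "e \<in> sectors J \<union> (\<lambda>e. e(Suc J := 1)) ` sectors J \<union> (\<lambda>e. e(Suc J := -1)) ` sectors J"
  thus "e \<in> sectors (Suc J)" using sectors_upd[of _ J] sectors_mono[of _ J "Suc J"] by auto
qed

lemma finite_sectors: "finite (sectors J)"
  by (induction J) (auto simp: sectors_0 sectors_Suc)

lemma inj_on_upd_sectors: "inj_on (\<lambda>e. e(Suc J := c)) (sectors J)"
  unfolding inj_on_def
proof (intro ballI impI)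
  fix e e' assume "e \<in> sectors J" "e' \<in> sectors J" "e(Suc J := c) = e'(Suc J := c)"
  thus "e = e'" using sectors_Suc_eq_0[of e J] sectors_Suc_eq_0[of e' J] by (metis fun_upd_triv fun_upd_upd)
qed

lemma sum_sectors_Suc: "(\<Sum>e\<in>sectors (Suc J). f e)
    = (\<Sum>e\<in>sectors J. f e) + (\<Sum>e\<in>sectors J. f (e(Suc J := 1))) + (\<Sum>e\<in>sectors J. f (e(Suc J := -1)))"
proof -
  let ?B = "(\<lambda>e. e(Suc J := 1)) ` sectors J" and ?C = "(\<lambda>e. e(Suc J := -1)) ` sectors J"
  have "sectors J \<inter> ?B = {}" "(sectors J \<union> ?B) \<inter> ?C = {}"
    by (auto dest: sectors_Suc_eq_0 fun_cong[where x = "Suc J"])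
  hence "(\<Sum>e\<in>sectors (Suc J). f e) = (\<Sum>e\<in>sectors J. f e) + (\<Sum>e\<in>?B. f e) + (\<Sum>e\<in>?C. f e)"
    unfolding sectors_Suc using finite_sectors by (simp add: sum.union_disjoint)
  thus ?thesis by (simp add: sum.reindex[OF inj_on_upd_sectors])
qed

lemma card_sectors: "card (sectors J) = 3^J"
proof (induction J)
  case 0 thus ?case by (simp add: sectors_0)
next
  case (Suc J)
  have "card (sectors (Suc J)) = (\<Sum>e\<in>sectors (Suc J). 1)" by simp
  also have "\<dots> = 3 * card (sectors J)" by (subst sum_sectors_Suc) simp
  finally show ?case using Suc by simp
qed

lemma sum_sectors_Suc_le:
  fixes f :: "(nat \<Rightarrow> int) \<Rightarrow> real"
  assumes "\<And>e c. e \<in> sectors J \<Longrightarrow> c \<in> {-1, 1} \<Longrightarrow> f (e(Suc J := c)) \<le> B"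
  shows "(\<Sum>e\<in>sectors (Suc J). f e) \<le> (\<Sum>e\<in>sectors J. f e) + 2 * 3^J * B"
proof -
  have "(\<Sum>e\<in>sectors J. f (e(Suc J := c))) \<le> 3^J * B" if "c \<in> {-1, 1}" for c
    using sum_bounded_above[of "sectors J" "\<lambda>e. f (e(Suc J := c))" B] assms that
    by (simp add: card_sectors)
  from this[of 1] this[of "-1"] show ?thesis by (simp add: sum_sectors_Suc[of f J])
qed

lemma freq_upd: "e \<in> sectors J \<Longrightarrow> freq lam (Suc J) (e(Suc J := c)) = freq lam J e + lam (Suc J) * of_int c"
  unfolding freq_def freq_on_def by (auto intro!: sum.cong)

lemma freq_sectors_beyond: "e \<in> sectors J \<Longrightarrow> J \<le> K \<Longrightarrow> freq lam K e = freq lam J e"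
  by (rule freq_beyond) (auto simp: sectors_def)

lemma freq_Suc: "e \<in> sectors J \<Longrightarrow> freq lam (Suc J) e = freq lam J e"
  by (rule freq_sectors_beyond) auto

lemma abs_freq_on_le: assumes "\<forall>i\<ge>1. 0 \<le> lam i" "e \<in> sectors J" "finite S"
  shows "\<bar>freq_on lam S e\<bar> \<le> (\<Sum>i\<in>{1..J}. lam i)"
proof -
  have "\<bar>freq_on lam S e\<bar> \<le> (\<Sum>i\<in>S. \<bar>lam i * of_int (e i)\<bar>)" unfolding freq_on_def by (rule sum_abs)
  also have "\<dots> = (\<Sum>i\<in>S \<inter> {1..J}. \<bar>lam i * of_int (e i)\<bar>)"
  proof (rule sum.mono_neutral_right)
    show "\<forall>i\<in>S - S \<inter> {1..J}. \<bar>lam i * of_int (e i)\<bar> = 0"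
    proof
      fix i assume "i \<in> S - S \<inter> {1..J}"
      hence "i = 0 \<or> J < i" by auto
      thus "\<bar>lam i * of_int (e i)\<bar> = 0" using assms(2) unfolding sectors_def by auto
    qed
  qed (use assms(3) in auto)
  also have "\<dots> \<le> (\<Sum>i\<in>{1..J}. \<bar>lam i * of_int (e i)\<bar>)" by (intro sum_mono2) auto
  also have "\<dots> \<le> (\<Sum>i\<in>{1..J}. lam i)"
  proof (rule sum_mono)
    fix i assume i: "i \<in> {1..J}"
    have "e i \<in> {-1, 0, 1}" using assms(2) unfolding sectors_def by blast
    hence "\<bar>real_of_int (e i)\<bar> \<le> 1" by auto
    thus "\<bar>lam i * of_int (e i)\<bar> \<le> lam i" using assms(1) i by (auto simp: abs_mult intro: mult_left_le)
  qed
  finally show ?thesis .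
qed

lemma abs_freq_le: "\<forall>i\<ge>1. 0 \<le> lam i \<Longrightarrow> e \<in> sectors J \<Longrightarrow> \<bar>freq lam K e\<bar> \<le> (\<Sum>i\<in>{1..J}. lam i)"
  unfolding freq_def by (rule abs_freq_on_le) auto

lemma abs_freq_diff_le: "\<forall>i\<ge>1. 0 \<le> lam i \<Longrightarrow> e \<in> sectors J \<Longrightarrow> k \<le> l
    \<Longrightarrow> \<bar>freq lam l e - freq lam k e\<bar> \<le> (\<Sum>i\<in>{1..J}. lam i)"
  unfolding freq_diff by (rule abs_freq_on_le) auto

lemma freq_site_diff_sector: assumes e: "e \<in> sectors J" and "a < 2^m" "b < 2^m"
  and ab: "\<forall>i\<ge>1. site_diff a b i = e i"
  shows "freq lam m (site_diff a b) = freq lam J e"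
proof -
  have "freq lam m (site_diff a b) = freq lam m e" using ab by (intro freq_cong) auto
  also have "\<dots> = freq lam (max m J) e"
    using site_diff_small[OF assms(2,3)] ab by (intro freq_beyond[symmetric]) auto
  also have "\<dots> = freq lam J e" using e by (intro freq_sectors_beyond) auto
  finally show ?thesis .
qed

lemma emb_sector_mask: assumes e: "e \<in> sectors J" and "J \<le> n"
  shows "emb n (sector_mask e) = sector_mask e"
proof (intro ext)
  fix a b
  show "emb n (sector_mask e) a b = sector_mask e a b"
  proof (cases "a div 2^n = b div 2^n")
    case True
    thus ?thesis unfolding emb_def sector_mask_def using site_diff_mod_fun[OF True, symmetric] by simp
  next
    case False
    then obtain i where i: "i > n" "site_diff a b i \<noteq> 0" using site_diff_high_ex by blast
    moreover have "e i = 0" using e i \<open>J \<le> n\<close> unfolding sectors_def by auto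
    ultimately have "\<not> (\<forall>i\<ge>1. site_diff a b i = e i)" by (metis less_one not_le_imp_less not_less_zero)
    hence "sector_mask e a b = 0" by (rule sector_mask_0)
    thus ?thesis unfolding emb_def using False by simp
  qed
qed

lemma is_uhf_sector_mask: assumes "e \<in> sectors J" shows "is_uhf (\<lambda>m. sector_mask e)"
  unfolding is_uhf_def
proof (intro allI impI exI)
  fix r :: real and n m assume "r > 0" "J \<le> n \<and> n \<le> m"
  thus "opnorm (2^m) (mdiff (sector_mask e) (emb n (sector_mask e))) < r"
    using emb_sector_mask[OF assms] by (simp add: mdiff_def opnorm_zero)
qed

lemma sum_sector_mask: "(\<Sum>e\<in>sectors J. sector_mask e a b) = local_mask J a b"
proof (cases "\<forall>i>J. site_diff a b i = 0")
  case True
  define e0 where "e0 i = (if 1 \<le> i \<and> i \<le> J then site_diff a b i else 0)" for i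
  have e0: "e0 \<in> sectors J" unfolding sectors_def e0_def using site_diff_range by auto
  have iff: "(\<forall>i\<ge>1. site_diff a b i = e i) \<longleftrightarrow> e = e0" if "e \<in> sectors J" for e
  proof
    assume h: "\<forall>i\<ge>1. site_diff a b i = e i"
    show "e = e0"
    proof
      fix i show "e i = e0 i"
        using h that True unfolding e0_def sectors_def by (cases "i = 0") auto
    qed
  next
    assume "e = e0"
    thus "\<forall>i\<ge>1. site_diff a b i = e i" using True unfolding e0_def by auto
  qed
  have "(\<Sum>e\<in>sectors J. sector_mask e a b) = (\<Sum>e\<in>sectors J. if e0 = e then 1 else 0)"
    unfolding sector_mask_def using iff by (intro sum.cong) auto
  also have "\<dots> = 1" using e0 finite_sectors by simp
  finally show ?thesis unfolding local_mask_def using True by simp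
next
  case False
  have "sector_mask e a b = 0" if "e \<in> sectors J" for e
  proof -
    have "\<not> (\<forall>i\<ge>1. site_diff a b i = e i)"
    proof
      assume h: "\<forall>i\<ge>1. site_diff a b i = e i"
      have "\<forall>i>J. site_diff a b i = 0" using h that unfolding sectors_def by auto
      thus False using False by simp
    qed
    thus ?thesis unfolding sector_mask_def by simp
  qed
  thus ?thesis unfolding local_mask_def using False by simp
qed

lemma anorm_le_sum_sector_proj: assumes V: "is_uhf V"
  shows "anorm V \<le> (\<Sum>e\<in>sectors J. anorm (sector_proj e V)) + anorm (adiff V (local_proj J V))"
proof (rule LIMSEQ_le[OF tendsto_anorm[OF V]])
  show "(\<lambda>m. (\<Sum>e\<in>sectors J. opnorm (2^m) (sector_proj e V m)) + opnorm (2^m) (adiff V (local_proj J V) m))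
        \<longlonglongrightarrow> (\<Sum>e\<in>sectors J. anorm (sector_proj e V)) + anorm (adiff V (local_proj J V))"
    by (intro tendsto_add tendsto_sum tendsto_anorm is_uhf_sector_proj is_uhf_adiff is_uhf_local_proj V)
  show "\<exists>N. \<forall>m\<ge>N. opnorm (2^m) (V m)
      \<le> (\<Sum>e\<in>sectors J. opnorm (2^m) (sector_proj e V m)) + opnorm (2^m) (adiff V (local_proj J V) m)"
  proof (intro exI allI impI)
    fix m
    have eq: "V m = (\<lambda>a b. adiff V (local_proj J V) m a b + (\<Sum>e\<in>sectors J. sector_proj e V m a b))"
    proof (intro ext)
      fix a b
      have "(\<Sum>e\<in>sectors J. sector_proj e V m a b) = (\<Sum>e\<in>sectors J. sector_mask e a b) * V m a b"
        unfolding sector_proj_def schur_def by (simp add: sum_distrib_right)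
      thus "V m a b = adiff V (local_proj J V) m a b + (\<Sum>e\<in>sectors J. sector_proj e V m a b)"
        unfolding sum_sector_mask adiff_def local_proj_def schur_def mdiff_def by simp
    qed
    have "opnorm (2^m) (V m)
        \<le> opnorm (2^m) (adiff V (local_proj J V) m) + opnorm (2^m) (\<lambda>a b. \<Sum>e\<in>sectors J. sector_proj e V m a b)"
      using opnorm_add_le[of "2^m" "adiff V (local_proj J V) m" "\<lambda>a b. \<Sum>e\<in>sectors J. sector_proj e V m a b"] eq by simp
    also have "opnorm (2^m) (\<lambda>a b. \<Sum>e\<in>sectors J. sector_proj e V m a b)
        \<le> (\<Sum>e\<in>sectors J. opnorm (2^m) (sector_proj e V m))"
      using opnorm_sum_le[OF finite_sectors[of J], of "2^m" "\<lambda>e. sector_proj e V m"] by simp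
    finally show "opnorm (2^m) (V m) \<le> (\<Sum>e\<in>sectors J. opnorm (2^m) (sector_proj e V m)) + opnorm (2^m) (adiff V (local_proj J V) m)"
      by simp
  qed
qed

lemma local_mask_emb: "schur (local_mask J) (emb J w) = emb J w"
  unfolding schur_def local_mask_def emb_def using site_diff_high by (auto simp: fun_eq_iff)

lemma local_proj_approx: assumes V: "is_uhf V" and e: "e > 0"
  shows "\<exists>J0. \<forall>J\<ge>J0. anorm (adiff V (local_proj J V)) \<le> e"
proof -
  obtain N where N: "\<And>n m. N \<le> n \<Longrightarrow> n \<le> m \<Longrightarrow> opnorm (2^m) (mdiff (V m) (emb n (V n))) < e/2"
    using V e unfolding is_uhf_def by (meson half_gt_zero)
  show ?thesis
  proof (intro exI allI impI)
    fix J assume J: "N \<le> J"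
    have "anorm (adiff V (local_proj J V)) \<le> 0 * anorm V + e"
    proof (rule anorm_le_eventually[OF is_uhf_adiff[OF V is_uhf_local_proj[OF V]] V])
      fix m assume m: "J \<le> m"
      define W where "W = mdiff (V m) (emb J (V J))"
      have "adiff V (local_proj J V) m = mdiff W (schur (local_mask J) W)"
      proof -
        have "schur (local_mask J) W = mdiff (schur (local_mask J) (V m)) (emb J (V J))"
          unfolding W_def using local_mask_emb[of J "V J"] unfolding schur_def mdiff_def
          by (auto simp: fun_eq_iff algebra_simps)
        thus ?thesis unfolding adiff_def local_proj_def W_def mdiff_def by (auto simp: fun_eq_iff)
      qed
      hence "opnorm (2^m) (adiff V (local_proj J V) m) \<le> opnorm (2^m) W + opnorm (2^m) (schur (local_mask J) W)"
        by (simp add: opnorm_mdiff_le)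
      also have "\<dots> \<le> opnorm (2^m) W + opnorm (2^m) W" using opnorm_local_mask_le by simp
      also have "\<dots> < e" using N[OF J m] unfolding W_def by simp
      finally show "opnorm (2^m) (adiff V (local_proj J V) m) \<le> 0 * opnorm (2^m) (V m) + e" by simp
    qed
    thus "anorm (adiff V (local_proj J V)) \<le> e" by simp
  qed
qed

lemma anorm_le_by_local_proj: assumes V: "is_uhf V" and h: "\<And>J. J1 \<le> J \<Longrightarrow> anorm V \<le> B + anorm (adiff V (local_proj J V))"
  shows "anorm V \<le> B"
proof (rule field_le_epsilon)
  fix e :: real assume e: "e > 0"
  obtain J0 where J0: "\<And>J. J0 \<le> J \<Longrightarrow> anorm (adiff V (local_proj J V)) \<le> e" using local_proj_approx[OF V e] by blast
  show "anorm V \<le> B + e" using h[of "max J0 J1"] J0[of "max J0 J1"] by simp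
qed

section \<open>The generator on a sector\<close>

definition diff_quotient :: "(nat \<Rightarrow> real) \<Rightarrow> real \<Rightarrow> (nat \<Rightarrow> mat) \<Rightarrow> (nat \<Rightarrow> mat)" where
  "diff_quotient lam t X = ascale (complex_of_real (1/t)) (adiff (alpha lam t X) X)"

definition exp_quotient :: "real \<Rightarrow> real \<Rightarrow> complex" where
  "exp_quotient W t = complex_of_real (1/t) * (exp (\<i> * complex_of_real (t * W)) - 1)"

lemma is_gen_iff: "is_gen lam X Y \<longleftrightarrow>
    is_uhf X \<and> is_uhf Y \<and> ((\<lambda>t. anorm (adiff (diff_quotient lam t X) Y)) \<longlongrightarrow> 0) (at 0)"
  unfolding is_gen_def diff_quotient_def ..

lemma is_uhf_diff_quotient: "is_uhf X \<Longrightarrow> is_uhf (diff_quotient lam t X)"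
  unfolding diff_quotient_def by (intro is_uhf_ascale is_uhf_adiff is_uhf_alpha)

lemma tendsto_exp_quotient: "((\<lambda>t. cmod (exp_quotient W t - \<i> * complex_of_real W)) \<longlongrightarrow> 0) (at 0)"
proof -
  define c where "c = \<i> * complex_of_real W"
  define F where "F z = exp (c * z)" for z :: complex
  have "(F has_field_derivative c) (at 0)"
    unfolding F_def by (auto intro!: derivative_eq_intros)
  hence g: "((\<lambda>h. (F (0 + h) - F 0) / h) \<longlongrightarrow> c) (at 0)" by (simp add: DERIV_def)
  have f: "(complex_of_real \<longlongrightarrow> 0) (at (0::real))"
    by (rule tendsto_eq_intros) (auto intro: tendsto_ident_at)
  have "eventually (\<lambda>w. complex_of_real w = 0 \<longrightarrow> (F (0 + 0) - F 0) / 0 = c) (at (0::real))"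
    unfolding eventually_at_filter by simp
  from tendsto_compose_at[OF f g this]
  have "(((\<lambda>h. (F (0 + h) - F 0) / h) \<circ> complex_of_real) \<longlongrightarrow> c) (at 0)" .
  moreover have "(\<lambda>h. (F (0 + h) - F 0) / h) \<circ> complex_of_real = exp_quotient W"
    unfolding F_def c_def comp_def exp_quotient_def by (intro ext) (simp add: divide_inverse ac_simps)
  ultimately have "(exp_quotient W \<longlongrightarrow> c) (at 0)" by simp
  hence "((\<lambda>t. exp_quotient W t - c) \<longlongrightarrow> 0) (at 0)" by (simp add: LIM_zero)
  thus ?thesis unfolding c_def by (rule tendsto_norm_zero)
qed

lemma sector_proj_diff_quotient:
  "entries_eq (sector_proj e (diff_quotient lam t X)) (diff_quotient lam t (sector_proj e X))"
  unfolding entries_eq_def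
proof (intro allI impI)
  fix m a b :: nat assume ab: "a < 2^m" "b < 2^m"
  have "alpha lam t X m a b = alpha_symbol lam t m a b * X m a b"
    and "alpha lam t (sector_proj e X) m a b = alpha_symbol lam t m a b * sector_proj e X m a b"
    using alpha_eq_schur[of lam t X] alpha_eq_schur[of lam t "sector_proj e X"] ab
    unfolding entries_eq_def schur_def by simp_all
  thus "sector_proj e (diff_quotient lam t X) m a b = diff_quotient lam t (sector_proj e X) m a b"
    unfolding diff_quotient_def ascale_def adiff_def mdiff_def
    by (simp add: sector_proj_def schur_def algebra_simps)
qed

lemma diff_quotient_sector_proj: assumes "e \<in> sectors J"
  shows "entries_eq (diff_quotient lam t (sector_proj e X))
                    (ascale (exp_quotient (freq lam J e) t) (sector_proj e X))"
  unfolding entries_eq_def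
proof (intro allI impI)
  fix m a b :: nat assume ab: "a < 2^m" "b < 2^m"
  have "alpha lam t (sector_proj e X) m a b = alpha_symbol lam t m a b * sector_proj e X m a b"
    using alpha_eq_schur[of lam t "sector_proj e X"] ab unfolding entries_eq_def schur_def by simp
  moreover have "alpha_symbol lam t m a b = exp (\<i> * complex_of_real (t * freq lam J e))"
    if "\<forall>i\<ge>1. site_diff a b i = e i"
    unfolding alpha_symbol_def using freq_site_diff_sector[OF assms ab that] by simp
  ultimately show "diff_quotient lam t (sector_proj e X) m a b
      = ascale (exp_quotient (freq lam J e) t) (sector_proj e X) m a b"
    unfolding diff_quotient_def exp_quotient_def ascale_def adiff_def mdiff_def
      sector_proj_def schur_def sector_mask_def
    by (auto simp: algebra_simps)
qed

lemma sector_proj_delta: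
  "entries_eq (sector_proj e (delta lam k X)) (ascale (\<i> * complex_of_real (freq lam k e)) (sector_proj e X))"
  unfolding entries_eq_def
proof (intro allI impI)
  fix m a b :: nat assume ab: "a < 2^m" "b < 2^m"
  have "delta lam k X m a b = delta_symbol lam k a b * X m a b"
    using delta_eq_schur[of lam k X] ab unfolding entries_eq_def schur_def by simp
  thus "sector_proj e (delta lam k X) m a b = ascale (\<i> * complex_of_real (freq lam k e)) (sector_proj e X) m a b"
    using freq_cong[of k "site_diff a b" e lam]
    unfolding sector_proj_def ascale_def schur_def sector_mask_def delta_symbol_def by auto
qed

lemma anorm_sector_proj_delta: assumes "is_uhf X"
  shows "anorm (adiff (sector_proj e (delta lam l X)) (ascale (\<i> * complex_of_real W) (sector_proj e X)))
    = \<bar>freq lam l e - W\<bar> * anorm (sector_proj e X)"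
proof -
  have "anorm (adiff (sector_proj e (delta lam l X)) (ascale (\<i> * complex_of_real W) (sector_proj e X)))
      = anorm (ascale (\<i> * complex_of_real (freq lam l e - W)) (sector_proj e X))"
    unfolding of_real_diff right_diff_distrib adiff_ascale[symmetric]
    by (intro anorm_cong entries_eq_adiff entries_eq_refl sector_proj_delta)
  thus ?thesis using anorm_ascale[OF is_uhf_sector_proj[OF assms]] by (simp add: norm_mult flip: of_real_diff)
qed

lemma anorm_sector_proj_gen_le:
  fixes lam :: "nat \<Rightarrow> real"
  assumes X: "is_uhf X" and Y: "is_uhf Y" and e: "e \<in> sectors J"
  defines "W \<equiv> freq lam J e"
  shows "anorm (adiff (sector_proj e Y) (ascale (\<i> * complex_of_real W) (sector_proj e X)))
    \<le> anorm (adiff (diff_quotient lam t X) Y) + cmod (exp_quotient W t - \<i> * complex_of_real W) * anorm (sector_proj e X)"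
proof -
  define PX where "PX = sector_proj e X"
  define PY where "PY = sector_proj e Y"
  have PX: "is_uhf PX" and PY: "is_uhf PY" unfolding PX_def PY_def by (intro is_uhf_sector_proj X Y)+
  have "entries_eq (sector_proj e (diff_quotient lam t X)) (ascale (exp_quotient W t) PX)"
    using diff_quotient_sector_proj[OF e, of lam t X] sector_proj_diff_quotient[of e lam t X]
    unfolding PX_def W_def entries_eq_def by simp
  hence "anorm (adiff (ascale (exp_quotient W t) PX) PY) = anorm (sector_proj e (adiff (diff_quotient lam t X) Y))"
    unfolding sector_proj_adiff PY_def by (intro anorm_cong entries_eq_adiff entries_eq_refl) (simp add: entries_eq_def)
  also have "\<dots> \<le> anorm (adiff (diff_quotient lam t X) Y)"
    by (intro anorm_sector_proj_le is_uhf_adiff is_uhf_diff_quotient X Y)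
  finally have "anorm (adiff PY (ascale (exp_quotient W t) PX)) \<le> anorm (adiff (diff_quotient lam t X) Y)"
    by (simp add: anorm_adiff_commute)
  moreover have "anorm (adiff PY (ascale (\<i> * complex_of_real W) PX))
      \<le> anorm (adiff PY (ascale (exp_quotient W t) PX))
        + anorm (adiff (ascale (exp_quotient W t) PX) (ascale (\<i> * complex_of_real W) PX))"
    by (intro anorm_adiff_triangle is_uhf_ascale PX PY)
  moreover have "anorm (adiff (ascale (exp_quotient W t) PX) (ascale (\<i> * complex_of_real W) PX))
      = cmod (exp_quotient W t - \<i> * complex_of_real W) * anorm PX"
    unfolding adiff_ascale by (rule anorm_ascale[OF PX])
  ultimately show ?thesis unfolding PX_def PY_def by linarith
qed

lemma sector_proj_gen: assumes g: "is_gen lam X Y" and e: "e \<in> sectors J"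
  shows "anorm (adiff (sector_proj e Y) (ascale (\<i> * complex_of_real (freq lam J e)) (sector_proj e X))) = 0"
    (is "?V = 0")
proof -
  have X: "is_uhf X" and Y: "is_uhf Y" and lim: "((\<lambda>t. anorm (adiff (diff_quotient lam t X) Y)) \<longlongrightarrow> 0) (at 0)"
    using g unfolding is_gen_iff by auto
  have "((\<lambda>t. anorm (adiff (diff_quotient lam t X) Y)
      + cmod (exp_quotient (freq lam J e) t - \<i> * complex_of_real (freq lam J e)) * anorm (sector_proj e X))
      \<longlongrightarrow> 0 + 0 * anorm (sector_proj e X)) (at 0)"
    by (intro tendsto_add lim tendsto_mult tendsto_exp_quotient tendsto_const)
  hence "?V \<le> 0 + 0 * anorm (sector_proj e X)"
    by (rule tendsto_lowerbound) (auto intro!: always_eventually anorm_sector_proj_gen_le[OF X Y e] simp: trivial_limit_at)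
  moreover have "0 \<le> ?V" by (intro anorm_nonneg is_uhf_adiff is_uhf_ascale is_uhf_sector_proj X Y)
  ultimately show ?thesis by simp
qed

lemma anorm_sector_proj_gen: assumes g: "is_gen lam X Y" and e: "e \<in> sectors J"
  shows "anorm (sector_proj e Y) = \<bar>freq lam J e\<bar> * anorm (sector_proj e X)"
proof -
  have X: "is_uhf X" and Y: "is_uhf Y" using g unfolding is_gen_def by auto
  have "anorm (sector_proj e Y) = anorm (ascale (\<i> * complex_of_real (freq lam J e)) (sector_proj e X))"
    using sector_proj_gen[OF g e] by (intro anorm_eq_if_anorm_adiff_eq_0 is_uhf_ascale is_uhf_sector_proj X Y)
  thus ?thesis using anorm_ascale[OF is_uhf_sector_proj[OF X]] by (simp add: norm_mult)
qed

lemma gen_sector_mask: assumes e: "e \<in> sectors J"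
  shows "is_gen lam (\<lambda>m. sector_mask e) (ascale (\<i> * complex_of_real (freq lam J e)) (\<lambda>m. sector_mask e))"
proof -
  define M where "M = (\<lambda>m::nat. sector_mask e)"
  define W where "W = freq lam J e"
  have M: "is_uhf M" unfolding M_def by (rule is_uhf_sector_mask[OF e])
  have "M = sector_proj e (\<lambda>m a b. 1)" unfolding M_def sector_proj_def schur_def by simp
  hence "entries_eq (diff_quotient lam t M) (ascale (exp_quotient W t) M)" for t
    using diff_quotient_sector_proj[OF e] unfolding W_def by simp
  hence "anorm (adiff (diff_quotient lam t M) (ascale (\<i> * complex_of_real W) M))
      = anorm (ascale (exp_quotient W t - \<i> * complex_of_real W) M)" for t
    unfolding adiff_ascale[symmetric] by (intro anorm_cong entries_eq_adiff entries_eq_refl)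
  hence "anorm (adiff (diff_quotient lam t M) (ascale (\<i> * complex_of_real W) M))
      = cmod (exp_quotient W t - \<i> * complex_of_real W) * anorm M" for t
    by (simp add: anorm_ascale[OF M])
  moreover have "((\<lambda>t. cmod (exp_quotient W t - \<i> * complex_of_real W) * anorm M) \<longlongrightarrow> 0 * anorm M) (at 0)"
    by (intro tendsto_mult tendsto_exp_quotient tendsto_const)
  ultimately show ?thesis
    unfolding is_gen_iff M_def[symmetric] W_def[symmetric] using M is_uhf_ascale[OF M] by simp
qed

section \<open>Estimates under the growth condition\<close>

lemma sum_div_diff_square_le:
  fixes L s q :: real
  assumes "0 \<le> s" "0 < q" "L \<ge> 2 * s + q"
  shows "(L + s) / (L - s)^2 \<le> 3 / (2 * q)"
proof -
  define u where "u = L - s"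
  have u: "u \<ge> s + q" using assms unfolding u_def by simp
  have "2 * q * (3 * u - 2 * q) \<le> 3 * u^2"
  proof -
    have "0 \<le> 3 * (u - q)^2 + q^2" by simp
    thus ?thesis by (simp add: power2_eq_square algebra_simps)
  qed
  moreover have "L + s \<le> 3 * u - 2 * q" using u unfolding u_def by simp
  ultimately have "2 * q * (L + s) \<le> 3 * u^2"
    using assms(2) by (smt (verit) mult_left_mono)
  hence "(L + s) / u^2 \<le> 3 / (2 * q)" using u assms by (simp add: field_simps)
  thus ?thesis unfolding u_def .
qed

lemma power_three_div_six: "(3::real)^n / 6^n = (1/2)^n"
  by (simp add: power_divide[symmetric])

locale fast_growth =
  fixes lam :: "nat \<Rightarrow> real"
  assumes lam_pos: "\<forall>i\<ge>1. lam i > 0"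
    and lam_growth: "\<forall>n\<ge>1. lam n \<ge> 2 * (\<Sum>i\<in>{1..<n}. lam i) + 6 ^ n"
begin

lemma lam_nonneg: "\<forall>i\<ge>1. 0 \<le> lam i" using lam_pos by (simp add: order_less_imp_le)

lemma lam_Suc_ge: "lam (Suc J) \<ge> 2 * (\<Sum>i\<in>{1..J}. lam i) + 6 ^ Suc J"
proof -
  have "{1..<Suc J} = {1..J}" by auto
  thus ?thesis using lam_growth[rule_format, of "Suc J"] by simp
qed

lemma sum_lam_nonneg: "0 \<le> (\<Sum>i\<in>{1..J}. lam i)" using lam_nonneg by (auto intro!: sum_nonneg)

lemma abs_freq_new_site_ge: assumes "e \<in> sectors J" "c \<in> {-1, 1}"
  shows "lam (Suc J) - (\<Sum>i\<in>{1..J}. lam i) \<le> \<bar>freq lam (Suc J) (e(Suc J := c))\<bar>"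
  using abs_freq_le[OF lam_nonneg assms(1), of J] freq_upd[OF assms(1), of lam c] assms(2) by auto

lemma power_le_abs_freq_new_site: assumes "e \<in> sectors J" "c \<in> {-1, 1}"
  shows "6^Suc J \<le> \<bar>freq lam (Suc J) (e(Suc J := c))\<bar>"
  using abs_freq_new_site_ge[OF assms] lam_Suc_ge[of J] sum_lam_nonneg[of J] by linarith

lemma freq_nonzero: "e \<in> sectors J \<Longrightarrow> e \<noteq> (\<lambda>_. 0) \<Longrightarrow> freq lam J e \<noteq> 0"
proof (induction J arbitrary: e)
  case 0 thus ?case by (simp add: sectors_0)
next
  case (Suc J)
  from Suc.prems(1) consider "e \<in> sectors J" | e' c where "e' \<in> sectors J" "c \<in> {-1,1}" "e = e'(Suc J := c)"
    unfolding sectors_Suc by blast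
  thus ?case
  proof cases
    case 1 thus ?thesis using Suc freq_Suc by simp
  next
    case 2
    have "6^Suc J \<le> \<bar>freq lam (Suc J) e\<bar>" using power_le_abs_freq_new_site[OF 2(1,2)] 2(3) by simp
    moreover have "(0::real) < 6^Suc J" by simp
    ultimately show ?thesis by linarith
  qed
qed

lemma sum_inv_freq_le: "(\<Sum>e\<in>sectors J. 1 / \<bar>freq lam J e\<bar>) \<le> 1 - (1/2)^J"
proof (induction J)
  case 0 thus ?case by (simp add: sectors_0 freq_zero)
next
  case (Suc J)
  have "(\<Sum>e\<in>sectors (Suc J). 1 / \<bar>freq lam (Suc J) e\<bar>)
      \<le> (\<Sum>e\<in>sectors J. 1 / \<bar>freq lam (Suc J) e\<bar>) + 2 * 3^J * (1 / 6^Suc J)"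
  proof (rule sum_sectors_Suc_le)
    fix e and c :: int assume "e \<in> sectors J" "c \<in> {-1, 1}"
    thus "1 / \<bar>freq lam (Suc J) (e(Suc J := c))\<bar> \<le> 1 / 6^Suc J"
      using power_le_abs_freq_new_site by (intro frac_le) auto
  qed
  also have "(\<Sum>e\<in>sectors J. 1 / \<bar>freq lam (Suc J) e\<bar>) = (\<Sum>e\<in>sectors J. 1 / \<bar>freq lam J e\<bar>)"
    by (intro sum.cong) (simp_all add: freq_Suc)
  also have "2 * 3^J * (1 / 6^Suc J) = (1/2::real)^J / 3"
    using power_three_div_six[of J] by simp
  finally have "(\<Sum>e\<in>sectors (Suc J). 1 / \<bar>freq lam (Suc J) e\<bar>)
      \<le> (\<Sum>e\<in>sectors J. 1 / \<bar>freq lam J e\<bar>) + (1/2)^J / 3" .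
  moreover have "(0::real) \<le> (1/2)^J" and "(1/2::real)^Suc J = (1/2)^J / 2" by simp_all
  ultimately show ?case using Suc.IH by linarith
qed

lemma sum_inv_freq_le_1: "(\<Sum>e\<in>sectors J. 1 / \<bar>freq lam J e\<bar>) \<le> 1"
  using sum_inv_freq_le[of J] by (smt (verit) zero_le_power zero_le_divide_iff)

lemma freq_diff_ratio_new_site_le: assumes e: "e \<in> sectors J" and c: "c \<in> {-1, 1}" and "k \<le> l"
  shows "\<bar>freq lam l (e(Suc J := c)) - freq lam k (e(Suc J := c))\<bar> / (freq lam (Suc J) (e(Suc J := c)))^2
    \<le> 3 / (2 * 6^Suc J)"
proof -
  define L where "L = lam (Suc J)"
  define s where "s = (\<Sum>i\<in>{1..J}. lam i)"
  have Ls: "L \<ge> 2 * s + 6^Suc J" unfolding L_def s_def by (rule lam_Suc_ge)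
  have Lsp: "0 < L - s" using Ls sum_lam_nonneg[of J] unfolding s_def by (smt (verit) zero_less_power)
  have "e(Suc J := c) \<in> sectors (Suc J)" using sectors_upd[OF e] c by auto
  from abs_freq_diff_le[OF lam_nonneg this \<open>k \<le> l\<close>]
  have "\<bar>freq lam l (e(Suc J := c)) - freq lam k (e(Suc J := c))\<bar> \<le> L + s"
    unfolding L_def s_def by (simp add: ac_simps)
  moreover have "(L - s)^2 \<le> (freq lam (Suc J) (e(Suc J := c)))^2"
    using abs_freq_new_site_ge[OF e c] Lsp unfolding L_def s_def
    by (metis abs_le_square_iff abs_of_pos less_imp_le)
  ultimately have "\<bar>freq lam l (e(Suc J := c)) - freq lam k (e(Suc J := c))\<bar> / (freq lam (Suc J) (e(Suc J := c)))^2
      \<le> (L + s) / (L - s)^2"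
    using Lsp by (intro frac_le) auto
  also have "\<dots> \<le> 3 / (2 * 6^Suc J)" using sum_div_diff_square_le[OF _ _ Ls] sum_lam_nonneg unfolding s_def by simp
  finally show ?thesis .
qed

lemma sum_freq_diff_ratio_le_aux: assumes "k \<le> l"
  shows "k \<le> J \<Longrightarrow> (\<Sum>e\<in>sectors J. \<bar>freq lam l e - freq lam k e\<bar> / (freq lam J e)^2) \<le> (1/2)^k - (1/2)^J"
proof (induction J)
  case 0 thus ?case by (simp add: sectors_0 freq_zero)
next
  case (Suc J)
  show ?case
  proof (cases "k \<le> J")
    case False
    hence "k = Suc J" using Suc.prems by simp
    hence "freq lam l e - freq lam k e = 0" if "e \<in> sectors (Suc J)" for e
      using freq_sectors_beyond[OF that, of l] freq_sectors_beyond[OF that, of k] assms by simp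
    thus ?thesis using \<open>k = Suc J\<close> by simp
  next
    case True
    have "(\<Sum>e\<in>sectors (Suc J). \<bar>freq lam l e - freq lam k e\<bar> / (freq lam (Suc J) e)^2)
        \<le> (\<Sum>e\<in>sectors J. \<bar>freq lam l e - freq lam k e\<bar> / (freq lam (Suc J) e)^2) + 2 * 3^J * (3 / (2 * 6^Suc J))"
      by (rule sum_sectors_Suc_le) (rule freq_diff_ratio_new_site_le[OF _ _ assms])
    also have "(\<Sum>e\<in>sectors J. \<bar>freq lam l e - freq lam k e\<bar> / (freq lam (Suc J) e)^2)
        = (\<Sum>e\<in>sectors J. \<bar>freq lam l e - freq lam k e\<bar> / (freq lam J e)^2)"
      by (intro sum.cong) (simp_all add: freq_Suc)
    also have "2 * 3^J * (3 / (2 * 6^Suc J)) = (1/2::real)^Suc J"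
      using power_three_div_six[of "Suc J"] by simp
    finally show ?thesis using Suc.IH[OF True] by simp
  qed
qed

lemma sum_freq_diff_ratio_le: assumes "k \<le> l"
  shows "(\<Sum>e\<in>sectors J. \<bar>freq lam l e - freq lam k e\<bar> / (freq lam J e)^2) \<le> (1/2)^k"
proof (cases "k \<le> J")
  case True
  thus ?thesis using sum_freq_diff_ratio_le_aux[OF assms True] by (smt (verit) zero_le_power zero_le_divide_iff)
next
  case False
  hence "freq lam l e - freq lam k e = 0" if "e \<in> sectors J" for e
    using freq_sectors_beyond[OF that, of l] freq_sectors_beyond[OF that, of k] assms by simp
  thus ?thesis by simp
qed

lemma anorm_gen_le_gen2: assumes g1: "is_gen lam X Y" and g2: "is_gen lam Y Z" shows "anorm Y \<le> anorm Z"
proof -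
  have Y: "is_uhf Y" and Z: "is_uhf Z" using g1 g2 unfolding is_gen_def by auto
  have bnd: "anorm (sector_proj e Y) \<le> anorm Z * (1 / \<bar>freq lam J e\<bar>)" if e: "e \<in> sectors J" for e J
  proof (cases "e = (\<lambda>_. 0)")
    case True
    thus ?thesis using anorm_sector_proj_gen[OF g1 e] by (simp add: freq_zero)
  next
    case False
    have "\<bar>freq lam J e\<bar> * anorm (sector_proj e Y) = anorm (sector_proj e Z)" using anorm_sector_proj_gen[OF g2 e] by simp
    also have "\<dots> \<le> anorm Z" by (rule anorm_sector_proj_le[OF Z])
    finally show ?thesis using freq_nonzero[OF e False] by (simp add: field_simps)
  qed
  show ?thesis
  proof (rule anorm_le_by_local_proj[OF Y, of 0])
    fix J :: nat
    have "anorm Y \<le> (\<Sum>e\<in>sectors J. anorm (sector_proj e Y)) + anorm (adiff Y (local_proj J Y))"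
      by (rule anorm_le_sum_sector_proj[OF Y])
    also have "(\<Sum>e\<in>sectors J. anorm (sector_proj e Y)) \<le> anorm Z * (\<Sum>e\<in>sectors J. 1 / \<bar>freq lam J e\<bar>)"
      unfolding sum_distrib_left using bnd by (intro sum_mono) simp
    also have "\<dots> \<le> anorm Z" using sum_inv_freq_le_1 anorm_nonneg[OF Z] by (simp add: mult_left_le)
    finally show "anorm Y \<le> anorm Z + anorm (adiff Y (local_proj J Y))" by simp
  qed
qed

lemma anorm_sector_proj_le_gen2: assumes g1: "is_gen lam X Y" and g2: "is_gen lam Y Z" and e: "e \<in> sectors J"
  and nz: "e \<noteq> (\<lambda>_. 0)"
  shows "anorm (sector_proj e X) \<le> anorm Z / (freq lam J e)^2"
proof -
  have Z: "is_uhf Z" using g2 unfolding is_gen_def by auto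
  have "(freq lam J e)^2 * anorm (sector_proj e X) = \<bar>freq lam J e\<bar> * (\<bar>freq lam J e\<bar> * anorm (sector_proj e X))"
    by (simp add: power2_eq_square abs_mult_self_eq)
  also have "\<dots> = anorm (sector_proj e Z)" using anorm_sector_proj_gen[OF g1 e] anorm_sector_proj_gen[OF g2 e] by simp
  also have "\<dots> \<le> anorm Z" by (rule anorm_sector_proj_le[OF Z])
  finally show ?thesis using freq_nonzero[OF e nz] by (simp add: field_simps)
qed

lemma anorm_le_sector_estimate: assumes g1: "is_gen lam X Y" and g2: "is_gen lam Y Z" and V: "is_uhf V"
  and "k \<le> l"
  and h: "\<And>e. e \<in> sectors J \<Longrightarrow>
    anorm (sector_proj e V) \<le> \<bar>freq lam l e - freq lam k e\<bar> * anorm (sector_proj e X)"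
  shows "anorm V \<le> (1/2)^k * anorm Z + anorm (adiff V (local_proj J V))"
proof -
  have Z: "is_uhf Z" using g2 unfolding is_gen_def by auto
  have bnd: "anorm (sector_proj e V) \<le> anorm Z * (\<bar>freq lam l e - freq lam k e\<bar> / (freq lam J e)^2)"
    if e: "e \<in> sectors J" for e
  proof (cases "e = (\<lambda>_. 0)")
    case True thus ?thesis using h[OF e] by (simp add: freq_zero)
  next
    case False
    have "anorm (sector_proj e V) \<le> \<bar>freq lam l e - freq lam k e\<bar> * anorm (sector_proj e X)" by (rule h[OF e])
    also have "\<dots> \<le> \<bar>freq lam l e - freq lam k e\<bar> * (anorm Z / (freq lam J e)^2)"
      by (intro mult_left_mono anorm_sector_proj_le_gen2[OF g1 g2 e False]) auto
    finally show ?thesis by (simp add: mult.commute)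
  qed
  have "anorm V \<le> (\<Sum>e\<in>sectors J. anorm (sector_proj e V)) + anorm (adiff V (local_proj J V))"
    by (rule anorm_le_sum_sector_proj[OF V])
  also have "(\<Sum>e\<in>sectors J. anorm (sector_proj e V))
      \<le> anorm Z * (\<Sum>e\<in>sectors J. \<bar>freq lam l e - freq lam k e\<bar> / (freq lam J e)^2)"
    unfolding sum_distrib_left using bnd by (intro sum_mono) simp
  also have "\<dots> \<le> anorm Z * (1/2)^k"
    using sum_freq_diff_ratio_le[OF \<open>k \<le> l\<close>] anorm_nonneg[OF Z] by (intro mult_left_mono) auto
  finally show ?thesis by (simp add: mult.commute)
qed

lemma anorm_delta_diff_le: assumes g1: "is_gen lam X Y" and g2: "is_gen lam Y Z" and "k \<le> l"
  shows "anorm (adiff (delta lam l X) (delta lam k X)) \<le> (1/2)^k * anorm Z"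
proof -
  have X: "is_uhf X" using g1 unfolding is_gen_def by auto
  define V where "V = adiff (delta lam l X) (delta lam k X)"
  have V: "is_uhf V" unfolding V_def by (intro is_uhf_adiff is_uhf_delta lam_nonneg X)
  have "anorm (sector_proj e V)
      = anorm (adiff (sector_proj e (delta lam l X)) (ascale (\<i> * complex_of_real (freq lam k e)) (sector_proj e X)))" for e
    unfolding V_def sector_proj_adiff by (intro anorm_cong entries_eq_adiff entries_eq_refl sector_proj_delta)
  hence "anorm (sector_proj e V) \<le> \<bar>freq lam l e - freq lam k e\<bar> * anorm (sector_proj e X)" for e
    by (simp add: anorm_sector_proj_delta[OF X])
  hence "anorm V \<le> (1/2)^k * anorm Z + anorm (adiff V (local_proj J V))" for J
    by (intro anorm_le_sector_estimate[OF g1 g2 V \<open>k \<le> l\<close>])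
  thus ?thesis unfolding V_def[symmetric] by (rule anorm_le_by_local_proj[OF V, of 0])
qed

lemma anorm_delta_gen_le: assumes g1: "is_gen lam X Y" and g2: "is_gen lam Y Z"
  shows "anorm (adiff (delta lam l X) Y) \<le> (1/2)^l * anorm Z"
proof -
  have X: "is_uhf X" and Y: "is_uhf Y" using g1 unfolding is_gen_def by auto
  define V where "V = adiff (delta lam l X) Y"
  have V: "is_uhf V" unfolding V_def by (intro is_uhf_adiff is_uhf_delta lam_nonneg X Y)
  have "anorm V \<le> (1/2)^l * anorm Z + anorm (adiff V (local_proj J V))" if "l \<le> J" for J
  proof (rule anorm_le_sector_estimate[OF g1 g2 V \<open>l \<le> J\<close>])
    fix e assume e: "e \<in> sectors J"
    define C where "C = ascale (\<i> * complex_of_real (freq lam J e)) (sector_proj e X)"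
    have "anorm (sector_proj e V) \<le> anorm (adiff (sector_proj e (delta lam l X)) C) + anorm (adiff C (sector_proj e Y))"
      unfolding V_def sector_proj_adiff C_def
      by (intro anorm_adiff_triangle is_uhf_sector_proj is_uhf_ascale is_uhf_delta lam_nonneg X Y)
    also have "anorm (adiff C (sector_proj e Y)) = 0"
      using sector_proj_gen[OF g1 e] anorm_adiff_commute[of C "sector_proj e Y"] unfolding C_def by simp
    also have "anorm (adiff (sector_proj e (delta lam l X)) C) = \<bar>freq lam J e - freq lam l e\<bar> * anorm (sector_proj e X)"
      unfolding C_def anorm_sector_proj_delta[OF X] by (simp add: abs_minus_commute)
    finally show "anorm (sector_proj e V) \<le> \<bar>freq lam J e - freq lam l e\<bar> * anorm (sector_proj e X)" by simp
  qed
  thus ?thesis unfolding V_def[symmetric] by (rule anorm_le_by_local_proj[OF V, of l])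
qed

lemma delta_tendsto_gen: assumes g1: "is_gen lam X Y" and g2: "is_gen lam Y Z"
  shows "(\<lambda>l. anorm (adiff (delta lam l X) Y)) \<longlonglongrightarrow> 0"
proof (rule tendsto_sandwich[of "\<lambda>_. 0" _ _ "\<lambda>l. (1/2)^l * anorm Z"])
  have X: "is_uhf X" and Y: "is_uhf Y" using g1 unfolding is_gen_def by auto
  show "\<forall>\<^sub>F n in sequentially. 0 \<le> anorm (adiff (delta lam n X) Y)"
    by (intro always_eventually allI anorm_nonneg is_uhf_adiff is_uhf_delta lam_nonneg X Y)
  show "\<forall>\<^sub>F n in sequentially. anorm (adiff (delta lam n X) Y) \<le> (1/2)^n * anorm Z"
    by (intro always_eventually allI anorm_delta_gen_le[OF g1 g2])
  show "(\<lambda>n. (1/2)^n * anorm Z) \<longlonglongrightarrow> 0"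
    using tendsto_mult[OF LIMSEQ_power_zero[of "1/2::real"] tendsto_const[of "anorm Z"]] by simp
qed simp

lemma gen_unbounded: "\<not> (\<exists>C. \<forall>X Y. is_gen lam X Y \<longrightarrow> anorm Y \<le> C * anorm X)"
proof
  assume "\<exists>C. \<forall>X Y. is_gen lam X Y \<longrightarrow> anorm Y \<le> C * anorm X"
  then obtain C where C: "\<And>X Y. is_gen lam X Y \<Longrightarrow> anorm Y \<le> C * anorm X" by blast
  define j where "j = Suc (nat \<lceil>C\<rceil>)"
  define e where "e = (\<lambda>i. of_bool (i = j) :: int)"
  define M where "M = (\<lambda>m::nat. sector_mask e)"
  have e: "e \<in> sectors j" unfolding e_def sectors_def j_def by auto
  have freq_e: "freq lam j e = lam j" unfolding freq_def freq_on_def e_def j_def by (simp add: of_bool_def)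
  have M: "is_uhf M" unfolding M_def by (rule is_uhf_sector_mask[OF e])
  have "sector_mask e 0 (2^(j-1)) = 1"
    unfolding sector_mask_def site_diff_def e_def j_def by (auto simp: bit_exp_iff)
  hence "1 \<le> anorm M"
    using anorm_ge_entry[OF M, of 0 j "2^(j-1)"] unfolding M_def j_def by simp
  have "C < real j" unfolding j_def by linarith
  also have "\<dots> < 2^j" by (rule of_nat_less_two_power)
  also have "\<dots> \<le> 6^j" by (rule power_mono) auto
  also have "\<dots> \<le> lam j"
    using lam_Suc_ge[of "nat \<lceil>C\<rceil>"] sum_lam_nonneg[of "nat \<lceil>C\<rceil>"] unfolding j_def by linarith
  finally have "C < lam j" .
  have "anorm (ascale (\<i> * complex_of_real (lam j)) M) \<le> C * anorm M"
    using C[OF gen_sector_mask[OF e, of lam]] unfolding M_def freq_e .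
  hence "lam j * anorm M \<le> C * anorm M"
    using anorm_ascale[OF M] lam_nonneg unfolding j_def by (simp add: norm_mult)
  thus False using \<open>C < lam j\<close> \<open>1 \<le> anorm M\<close> by (simp add: mult_le_cancel_right)
qed

end

theorem mainTheorem9:
  fixes lam :: "nat \<Rightarrow> real"
  assumes "\<forall>i\<ge>1. lam i > 0"
    and "\<forall>n\<ge>1. lam n \<ge> 2 * (\<Sum>i\<in>{1..<n}. lam i) + 6 ^ n"
  shows "(\<forall>X Y Z. is_gen lam X Y \<and> is_gen lam Y Z \<longrightarrow>
            anorm Y \<le> anorm Z
          \<and> (\<forall>k l. 1 \<le> k \<and> k \<le> l \<longrightarrow>
               anorm (adiff (delta lam l X) (delta lam k X)) \<le> (1 / 2) ^ k * anorm Z)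
          \<and> (\<lambda>l. anorm (adiff (delta lam l X) Y)) \<longlonglongrightarrow> 0)
       \<and> \<not> (\<exists>C. \<forall>X Y. is_gen lam X Y \<longrightarrow> anorm Y \<le> C * anorm X)"
proof -
  interpret fast_growth lam using assms by unfold_locales
  show ?thesis
    using anorm_gen_le_gen2 anorm_delta_diff_le delta_tendsto_gen gen_unbounded by blast
qed

end
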